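(* Let $G$ be a finite group, $\varphi\colon T\to S$ a morphism of $G$-Tambara functors, and $J$ a radical Tambara ideal of $S$. Then the levelwise preimage $\varphi^{-1}(J)$, defined by $\varphi^{-1}(J)(G/H)=\varphi_H^{-1}(J(G/H))$, is a radical Tambara ideal of $T$.
   Context: All rings are commutative with unit. A $G$-Tambara functor $T$ consists of commutative rings $T(G/H)$ for subgroups $H\le G$ with restriction ring maps, additive transfer maps, multiplicative norm maps and conjugation isomorphisms satisfying the standard Tambara axioms (Hill–Mazur). A morphism $\varphi\colon T\to S$ is a family of ring homomorphisms $\varphi_H\colon T(G/H)\to S(G/H)$ commuting with all restrictions, transfers, norms and conjugations. A Tambara ideal is a family of ring ideals $I(G/H)\subseteq T(G/H)$ closed under restriction, transfer, norm and conjugation. $\langle x\rangle$ is the Tambara ideal generated by $x$; products of Tambara ideals are generated by levelwise products. The radical $\sqrt I$ has $\sqrt I(G/H)=\{x\mid \langle x\rangle^n\subseteq I\text{ for some }n\ge1\}$; $I$ is radical if $I=\sqrt I$. *)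

theory Defs
  imports "HOL-Algebra.Algebra"
begin

definition conjg :: "('g,'m) monoid_scheme \<Rightarrow> 'g \<Rightarrow> 'g set \<Rightarrow> 'g set" where
  "conjg G g H = {g \<otimes>\<^bsub>G\<^esub> h \<otimes>\<^bsub>G\<^esub> inv\<^bsub>G\<^esub> g | h. h \<in> H}"

definition dcosets :: "('g,'m) monoid_scheme \<Rightarrow> 'g set \<Rightarrow> 'g set \<Rightarrow> 'g set \<Rightarrow> 'g set set" where
  "dcosets G H K L = {{k \<otimes>\<^bsub>G\<^esub> g \<otimes>\<^bsub>G\<^esub> l | k l. k \<in> K \<and> l \<in> L} | g. g \<in> H}"

definition lcos :: "('g,'m) monoid_scheme \<Rightarrow> 'g set \<Rightarrow> 'g set \<Rightarrow> 'g set set" where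
  "lcos G H K = {l_coset G x K | x. x \<in> H}"

definition rep :: "'x set \<Rightarrow> 'x" where
  "rep D = (SOME g. g \<in> D)"

text \<open>tlev T H is the ring T(G/H); tres T K H : T(G/H) -> T(G/K) (K <= H);
  ttr T K H, tnm T K H : T(G/K) -> T(G/H) (K <= H);
  tcj T g H : T(G/H) -> T(G/gHg^{-1}).\<close>
record ('g,'a) tambara_data =
  tlev :: "'g set \<Rightarrow> 'a ring"
  tres :: "'g set \<Rightarrow> 'g set \<Rightarrow> 'a \<Rightarrow> 'a"
  ttr  :: "'g set \<Rightarrow> 'g set \<Rightarrow> 'a \<Rightarrow> 'a"
  tnm  :: "'g set \<Rightarrow> 'g set \<Rightarrow> 'a \<Rightarrow> 'a"
  tcj  :: "'g \<Rightarrow> 'g set \<Rightarrow> 'a \<Rightarrow> 'a"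

definition bfuns :: "('g,'m) monoid_scheme \<Rightarrow> 'g set \<Rightarrow> 'g set \<Rightarrow> ('g set \<Rightarrow> bool) set" where
  "bfuns G H K = lcos G H K \<rightarrow>\<^sub>E (UNIV :: bool set)"

definition bact :: "('g,'m) monoid_scheme \<Rightarrow> 'g set \<Rightarrow> 'g set \<Rightarrow> 'g \<Rightarrow> ('g set \<Rightarrow> bool) \<Rightarrow> ('g set \<Rightarrow> bool)" where
  "bact G H K h f = (\<lambda>c\<in>lcos G H K. f (l_coset G (inv\<^bsub>G\<^esub> h) c))"

text \<open>H-set of sections s : H/K -> H/L of the projection H/L -> H/K (L <= K <= H),
  with action (h.s)(c) = h s(h^{-1} c).\<close>
definition sects :: "('g,'m) monoid_scheme \<Rightarrow> 'g set \<Rightarrow> 'g set \<Rightarrow> 'g set \<Rightarrow> ('g set \<Rightarrow> 'g set) set" where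
  "sects G H K L = {s \<in> lcos G H K \<rightarrow>\<^sub>E lcos G H L. \<forall>c \<in> lcos G H K. s c \<subseteq> c}"

definition sact :: "('g,'m) monoid_scheme \<Rightarrow> 'g set \<Rightarrow> 'g set \<Rightarrow> 'g \<Rightarrow> ('g set \<Rightarrow> 'g set) \<Rightarrow> ('g set \<Rightarrow> 'g set)" where
  "sact G H K h s = (\<lambda>c\<in>lcos G H K. l_coset G h (s (l_coset G (inv\<^bsub>G\<^esub> h) c)))"

definition horbits :: "'g set \<Rightarrow> ('g \<Rightarrow> 'x \<Rightarrow> 'x) \<Rightarrow> 'x set \<Rightarrow> 'x set set" where
  "horbits H A Y = {{A g0 x0 | g0. g0 \<in> H} | x0. x0 \<in> Y}"

definition hstab :: "'g set \<Rightarrow> ('g \<Rightarrow> 'x \<Rightarrow> 'x) \<Rightarrow> 'x \<Rightarrow> 'g set" where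
  "hstab H A x0 = {g0 \<in> H. A g0 x0 = x0}"

section \<open>G-Tambara functors (levelwise axioms, after Hill--Mazur)\<close>

definition is_tambara :: "('g,'m) monoid_scheme \<Rightarrow> ('g,'a) tambara_data \<Rightarrow> bool" where
  "is_tambara G T \<longleftrightarrow>
   \<comment> \<open>levels are commutative rings\<close>
   (\<forall>H. subgroup H G \<longrightarrow> cring (tlev T H)) \<and>
   \<comment> \<open>restriction: ring maps, functorial\<close>
   (\<forall>K H. subgroup K G \<longrightarrow> subgroup H G \<longrightarrow> K \<subseteq> H \<longrightarrow>
       tres T K H \<in> ring_hom (tlev T H) (tlev T K)) \<and>
   (\<forall>H. subgroup H G \<longrightarrow> (\<forall>x \<in> carrier (tlev T H). tres T H H x = x)) \<and>
   (\<forall>L K H. subgroup L G \<longrightarrow> subgroup K G \<longrightarrow> subgroup H G \<longrightarrow> L \<subseteq> K \<longrightarrow> K \<subseteq> H \<longrightarrow>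
       (\<forall>x \<in> carrier (tlev T H). tres T L K (tres T K H x) = tres T L H x)) \<and>
   \<comment> \<open>transfer: additive maps, functorial\<close>
   (\<forall>K H. subgroup K G \<longrightarrow> subgroup H G \<longrightarrow> K \<subseteq> H \<longrightarrow>
       (\<forall>x \<in> carrier (tlev T K). ttr T K H x \<in> carrier (tlev T H)) \<and>
       (\<forall>x \<in> carrier (tlev T K). \<forall>y \<in> carrier (tlev T K).
          ttr T K H (x \<oplus>\<^bsub>tlev T K\<^esub> y) = ttr T K H x \<oplus>\<^bsub>tlev T H\<^esub> ttr T K H y)) \<and>
   (\<forall>H. subgroup H G \<longrightarrow> (\<forall>x \<in> carrier (tlev T H). ttr T H H x = x)) \<and>
   (\<forall>L K H. subgroup L G \<longrightarrow> subgroup K G \<longrightarrow> subgroup H G \<longrightarrow> L \<subseteq> K \<longrightarrow> K \<subseteq> H \<longrightarrow>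
       (\<forall>x \<in> carrier (tlev T L). ttr T K H (ttr T L K x) = ttr T L H x)) \<and>
   \<comment> \<open>norm: multiplicative maps preserving 1 and 0, functorial\<close>
   (\<forall>K H. subgroup K G \<longrightarrow> subgroup H G \<longrightarrow> K \<subseteq> H \<longrightarrow>
       (\<forall>x \<in> carrier (tlev T K). tnm T K H x \<in> carrier (tlev T H)) \<and>
       (\<forall>x \<in> carrier (tlev T K). \<forall>y \<in> carrier (tlev T K).
          tnm T K H (x \<otimes>\<^bsub>tlev T K\<^esub> y) = tnm T K H x \<otimes>\<^bsub>tlev T H\<^esub> tnm T K H y) \<and>
       tnm T K H \<one>\<^bsub>tlev T K\<^esub> = \<one>\<^bsub>tlev T H\<^esub> \<and>
       tnm T K H \<zero>\<^bsub>tlev T K\<^esub> = \<zero>\<^bsub>tlev T H\<^esub>) \<and>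
   (\<forall>H. subgroup H G \<longrightarrow> (\<forall>x \<in> carrier (tlev T H). tnm T H H x = x)) \<and>
   (\<forall>L K H. subgroup L G \<longrightarrow> subgroup K G \<longrightarrow> subgroup H G \<longrightarrow> L \<subseteq> K \<longrightarrow> K \<subseteq> H \<longrightarrow>
       (\<forall>x \<in> carrier (tlev T L). tnm T K H (tnm T L K x) = tnm T L H x)) \<and>
   \<comment> \<open>conjugations: ring maps, action, inner conjugations trivial\<close>
   (\<forall>H g. subgroup H G \<longrightarrow> g \<in> carrier G \<longrightarrow>
       tcj T g H \<in> ring_hom (tlev T H) (tlev T (conjg G g H))) \<and>
   (\<forall>H g g'. subgroup H G \<longrightarrow> g \<in> carrier G \<longrightarrow> g' \<in> carrier G \<longrightarrow>
       (\<forall>x \<in> carrier (tlev T H).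
          tcj T (g \<otimes>\<^bsub>G\<^esub> g') H x = tcj T g (conjg G g' H) (tcj T g' H x))) \<and>
   (\<forall>H h. subgroup H G \<longrightarrow> h \<in> H \<longrightarrow> (\<forall>x \<in> carrier (tlev T H). tcj T h H x = x)) \<and>
   \<comment> \<open>conjugations commute with restriction, transfer, norm\<close>
   (\<forall>K H g. subgroup K G \<longrightarrow> subgroup H G \<longrightarrow> K \<subseteq> H \<longrightarrow> g \<in> carrier G \<longrightarrow>
       (\<forall>x \<in> carrier (tlev T H).
          tcj T g K (tres T K H x) = tres T (conjg G g K) (conjg G g H) (tcj T g H x)) \<and>
       (\<forall>x \<in> carrier (tlev T K).
          tcj T g H (ttr T K H x) = ttr T (conjg G g K) (conjg G g H) (tcj T g K x)) \<and>
       (\<forall>x \<in> carrier (tlev T K).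
          tcj T g H (tnm T K H x) = tnm T (conjg G g K) (conjg G g H) (tcj T g K x))) \<and>
   \<comment> \<open>Frobenius reciprocity\<close>
   (\<forall>K H. subgroup K G \<longrightarrow> subgroup H G \<longrightarrow> K \<subseteq> H \<longrightarrow>
       (\<forall>a \<in> carrier (tlev T K). \<forall>b \<in> carrier (tlev T H).
          ttr T K H (a \<otimes>\<^bsub>tlev T K\<^esub> tres T K H b) = ttr T K H a \<otimes>\<^bsub>tlev T H\<^esub> b)) \<and>
   \<comment> \<open>additive Mackey double coset formula\<close>
   (\<forall>K L H. subgroup K G \<longrightarrow> subgroup L G \<longrightarrow> subgroup H G \<longrightarrow> K \<subseteq> H \<longrightarrow> L \<subseteq> H \<longrightarrow>
       (\<forall>a \<in> carrier (tlev T L).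
          tres T K H (ttr T L H a) =
          finsum (tlev T K)
            (\<lambda>D. ttr T (K \<inter> conjg G (rep D) L) K
                   (tcj T (rep D) (conjg G (inv\<^bsub>G\<^esub> (rep D)) K \<inter> L)
                     (tres T (conjg G (inv\<^bsub>G\<^esub> (rep D)) K \<inter> L) L a)))
            (dcosets G H K L))) \<and>
   \<comment> \<open>multiplicative Mackey double coset formula\<close>
   (\<forall>K L H. subgroup K G \<longrightarrow> subgroup L G \<longrightarrow> subgroup H G \<longrightarrow> K \<subseteq> H \<longrightarrow> L \<subseteq> H \<longrightarrow>
       (\<forall>a \<in> carrier (tlev T L).
          tres T K H (tnm T L H a) =
          finprod (tlev T K)
            (\<lambda>D. tnm T (K \<inter> conjg G (rep D) L) K
                   (tcj T (rep D) (conjg G (inv\<^bsub>G\<^esub> (rep D)) K \<inter> L)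
                     (tres T (conjg G (inv\<^bsub>G\<^esub> (rep D)) K \<inter> L) L a)))
            (dcosets G H K L))) \<and>
   \<comment> \<open>Tambara reciprocity for sums (exponential formula)\<close>
   (\<forall>K H. subgroup K G \<longrightarrow> subgroup H G \<longrightarrow> K \<subseteq> H \<longrightarrow>
       (\<forall>a \<in> carrier (tlev T K). \<forall>b \<in> carrier (tlev T K).
          tnm T K H (a \<oplus>\<^bsub>tlev T K\<^esub> b) =
          finsum (tlev T H)
            (\<lambda>Orb. let f = rep Orb; Hf = hstab H (bact G H K) f in
               ttr T Hf H
                 (finprod (tlev T Hf)
                   (\<lambda>D. let x = rep D in
                      tnm T (Hf \<inter> conjg G x K) Hf
                        (tcj T x (conjg G (inv\<^bsub>G\<^esub> x) Hf \<inter> K)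
                          (tres T (conjg G (inv\<^bsub>G\<^esub> x) Hf \<inter> K) K
                             (if f (l_coset G x K) then a else b))))
                   (dcosets G H Hf K)))
            (horbits H (bact G H K) (bfuns G H K)))) \<and>
   \<comment> \<open>Tambara reciprocity for transfers (exponential formula)\<close>
   (\<forall>L K H. subgroup L G \<longrightarrow> subgroup K G \<longrightarrow> subgroup H G \<longrightarrow> L \<subseteq> K \<longrightarrow> K \<subseteq> H \<longrightarrow>
       (\<forall>a \<in> carrier (tlev T L).
          tnm T K H (ttr T L K a) =
          finsum (tlev T H)
            (\<lambda>Orb. let s = rep Orb; Hs = hstab H (sact G H K) s in
               ttr T Hs H
                 (finprod (tlev T Hs)
                   (\<lambda>D. let x = rep D;
                          y = (SOME y. y \<in> H \<and> s (l_coset G x K) = l_coset G y L) in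
                      tnm T (Hs \<inter> conjg G y L) Hs
                        (tcj T y (conjg G (inv\<^bsub>G\<^esub> y) Hs \<inter> L)
                          (tres T (conjg G (inv\<^bsub>G\<^esub> y) Hs \<inter> L) L a)))
                   (dcosets G H Hs K)))
            (horbits H (sact G H K) (sects G H K L))))"

definition is_tmorph :: "('g,'m) monoid_scheme \<Rightarrow> ('g,'a) tambara_data \<Rightarrow> ('g,'b) tambara_data
    \<Rightarrow> ('g set \<Rightarrow> 'a \<Rightarrow> 'b) \<Rightarrow> bool" where
  "is_tmorph G T S \<phi> \<longleftrightarrow>
   (\<forall>H. subgroup H G \<longrightarrow> \<phi> H \<in> ring_hom (tlev T H) (tlev S H)) \<and>
   (\<forall>K H. subgroup K G \<longrightarrow> subgroup H G \<longrightarrow> K \<subseteq> H \<longrightarrow>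
      (\<forall>x \<in> carrier (tlev T H). \<phi> K (tres T K H x) = tres S K H (\<phi> H x)) \<and>
      (\<forall>x \<in> carrier (tlev T K). \<phi> H (ttr T K H x) = ttr S K H (\<phi> K x)) \<and>
      (\<forall>x \<in> carrier (tlev T K). \<phi> H (tnm T K H x) = tnm S K H (\<phi> K x))) \<and>
   (\<forall>H g. subgroup H G \<longrightarrow> g \<in> carrier G \<longrightarrow>
      (\<forall>x \<in> carrier (tlev T H). \<phi> (conjg G g H) (tcj T g H x) = tcj S g H (\<phi> H x)))"

definition is_tideal :: "('g,'m) monoid_scheme \<Rightarrow> ('g,'a) tambara_data \<Rightarrow> ('g set \<Rightarrow> 'a set) \<Rightarrow> bool" where
  "is_tideal G T I \<longleftrightarrow>
   (\<forall>H. subgroup H G \<longrightarrow> ideal (I H) (tlev T H)) \<and>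
   (\<forall>K H. subgroup K G \<longrightarrow> subgroup H G \<longrightarrow> K \<subseteq> H \<longrightarrow>
      (\<forall>x \<in> I H. tres T K H x \<in> I K) \<and>
      (\<forall>x \<in> I K. ttr T K H x \<in> I H) \<and>
      (\<forall>x \<in> I K. tnm T K H x \<in> I H)) \<and>
   (\<forall>H g. subgroup H G \<longrightarrow> g \<in> carrier G \<longrightarrow>
      (\<forall>x \<in> I H. tcj T g H x \<in> I (conjg G g H)))"

definition tgen :: "('g,'m) monoid_scheme \<Rightarrow> ('g,'a) tambara_data \<Rightarrow> ('g set \<Rightarrow> 'a set) \<Rightarrow> ('g set \<Rightarrow> 'a set)" where
  "tgen G T A = (\<lambda>L. \<Inter> {I L | I. is_tideal G T I \<and> (\<forall>M. subgroup M G \<longrightarrow> A M \<subseteq> I M)})"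

definition tgen1 :: "('g,'m) monoid_scheme \<Rightarrow> ('g,'a) tambara_data \<Rightarrow> 'g set \<Rightarrow> 'a \<Rightarrow> ('g set \<Rightarrow> 'a set)" where
  "tgen1 G T H x = tgen G T (\<lambda>L. if L = H then {x} else {})"

definition tprod :: "('g,'m) monoid_scheme \<Rightarrow> ('g,'a) tambara_data \<Rightarrow> ('g set \<Rightarrow> 'a set) \<Rightarrow> ('g set \<Rightarrow> 'a set) \<Rightarrow> ('g set \<Rightarrow> 'a set)" where
  "tprod G T I J = tgen G T (\<lambda>L. {a \<otimes>\<^bsub>tlev T L\<^esub> b | a b. a \<in> I L \<and> b \<in> J L})"

fun tpow :: "('g,'m) monoid_scheme \<Rightarrow> ('g,'a) tambara_data \<Rightarrow> ('g set \<Rightarrow> 'a set) \<Rightarrow> nat \<Rightarrow> ('g set \<Rightarrow> 'a set)" where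
  "tpow G T I 0 = (\<lambda>L. carrier (tlev T L))"
| "tpow G T I (Suc n) = tprod G T (tpow G T I n) I"

definition tradical :: "('g,'m) monoid_scheme \<Rightarrow> ('g,'a) tambara_data \<Rightarrow> ('g set \<Rightarrow> 'a set) \<Rightarrow> ('g set \<Rightarrow> 'a set)" where
  "tradical G T I = (\<lambda>H. {x \<in> carrier (tlev T H). \<exists>n\<ge>1.
       \<forall>L. subgroup L G \<longrightarrow> tpow G T (tgen1 G T H x) n L \<subseteq> I L})"

definition is_radical :: "('g,'m) monoid_scheme \<Rightarrow> ('g,'a) tambara_data \<Rightarrow> ('g set \<Rightarrow> 'a set) \<Rightarrow> bool" where
  "is_radical G T I \<longleftrightarrow> (\<forall>H. subgroup H G \<longrightarrow> I H = tradical G T I H)"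

definition tpreim :: "('g,'a) tambara_data \<Rightarrow> ('g set \<Rightarrow> 'a \<Rightarrow> 'b) \<Rightarrow> ('g set \<Rightarrow> 'b set) \<Rightarrow> ('g set \<Rightarrow> 'a set)" where
  "tpreim T \<phi> J = (\<lambda>H. {x \<in> carrier (tlev T H). \<phi> H x \<in> J H})"

end

theory Submission
  imports Defs
begin

text \<open>Preimages of Tambara ideals are Tambara ideals because \<open>\<phi>\<close> commutes with restriction,
  transfer, norm and conjugation. For radicality, if \<open>\<langle>x\<rangle>\<^sup>n \<subseteq> \<phi>\<inverse>(J)\<close> it suffices to show
  \<open>\<langle>\<phi> x\<rangle>\<^sup>n \<subseteq> \<langle>\<phi>(\<langle>x\<rangle>\<^sup>n)\<rangle>\<close>, since the right-hand side lies in \<open>J\<close>; then \<open>\<phi> x \<in> \<surd>J = J\<close>.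
  By induction on \<open>n\<close> this reduces to \<open>\<langle>\<phi>(I)\<rangle> \<langle>\<phi>(I')\<rangle> \<subseteq> \<langle>\<phi>(I I')\<rangle>\<close>, which needs an explicit
  description of \<open>\<langle>\<phi>(I)\<rangle>\<close>: it consists of the sums of transfers of elements \<open>s \<phi>(i)\<close>.
  That this set is closed under norms follows from the exponential formulas for norms of sums and
  of transfers, by induction on the order of the subgroup; Frobenius reciprocity then reduces
  products of such sums to products of generators.\<close>

section \<open>Conjugate subgroups, double cosets and group actions\<close>

lemma rep_mem: "D \<noteq> {} \<Longrightarrow> rep D \<in> D"
  unfolding rep_def by (simp add: some_in_eq)

definition action_on :: "('g,'m) monoid_scheme \<Rightarrow> 'g set \<Rightarrow> ('g \<Rightarrow> 'x \<Rightarrow> 'x) \<Rightarrow> 'x set \<Rightarrow> bool" where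
  "action_on G H A Y \<longleftrightarrow> (\<forall>g\<in>H. \<forall>y\<in>Y. A g y \<in> Y) \<and> (\<forall>y\<in>Y. A \<one>\<^bsub>G\<^esub> y = y) \<and>
     (\<forall>g\<in>H. \<forall>h\<in>H. \<forall>y\<in>Y. A (g \<otimes>\<^bsub>G\<^esub> h) y = A g (A h y))"

context group
begin

lemma conjg_image: "conjg G g H = (\<lambda>h. g \<otimes> h \<otimes> inv g) ` H"
  unfolding conjg_def by blast

lemma conjg_eq_cosets: "conjg G g H = g <# H #> inv g"
  unfolding conjg_def l_coset_def r_coset_def by auto

lemma subgroup_conjg: "subgroup H G \<Longrightarrow> g \<in> carrier G \<Longrightarrow> subgroup (conjg G g H) G"
  using subgroup_conjugation_is_surj1[of "inv g" H] by (simp add: conjg_eq_cosets)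

lemma conjg_mono: "A \<subseteq> B \<Longrightarrow> conjg G g A \<subseteq> conjg G g B"
  unfolding conjg_image by (rule image_mono)

lemma conjg_conjg:
  assumes "H \<subseteq> carrier G" "g \<in> carrier G" "h \<in> carrier G"
  shows "conjg G g (conjg G h H) = conjg G (g \<otimes> h) H"
  unfolding conjg_image image_image
  using assms by (intro image_cong) (auto simp: m_assoc inv_mult_group subset_iff)

lemma conjg_one: "H \<subseteq> carrier G \<Longrightarrow> conjg G \<one> H = H"
  unfolding conjg_image by (auto simp: subset_iff)

lemma conjg_inv_conjg:
  assumes "H \<subseteq> carrier G" "g \<in> carrier G"
  shows "conjg G (inv g) (conjg G g H) = H" "conjg G g (conjg G (inv g) H) = H"
  using assms by (simp_all add: conjg_conjg conjg_one)

lemma conjg_Int: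
  assumes "A \<subseteq> carrier G" "B \<subseteq> carrier G" "g \<in> carrier G"
  shows "conjg G g (A \<inter> B) = conjg G g A \<inter> conjg G g B"
proof -
  have "inj_on (\<lambda>h. g \<otimes> h \<otimes> inv g) (A \<union> B)"
    using assms by (intro inj_onI) (auto dest: conjugation_is_inj)
  then show ?thesis
    unfolding conjg_image by (rule inj_on_image_Int) auto
qed

lemma conjg_inv_Int:
  assumes "A \<subseteq> carrier G" "B \<subseteq> carrier G" "x \<in> carrier G"
  shows "conjg G x (conjg G (inv x) A \<inter> B) = A \<inter> conjg G x B"
proof -
  have "conjg G (inv x) A \<subseteq> carrier G"
    using assms unfolding conjg_def by auto
  then show ?thesis
    using assms by (simp add: conjg_Int conjg_inv_conjg)
qed

lemma subgroup_conjg_Int: "subgroup K G \<Longrightarrow> subgroup L G \<Longrightarrow> x \<in> carrier G \<Longrightarrow> subgroup (conjg G x K \<inter> L) G"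
  by (intro subgroups_Inter_pair subgroup_conjg)

lemma dcoset_subset:
  assumes "subgroup H G" "K \<subseteq> H" "L \<subseteq> H" "D \<in> dcosets G H K L"
  shows "D \<subseteq> H"
  using assms unfolding dcosets_def by (auto intro!: subgroup.m_closed)

lemma rep_dcoset:
  assumes "subgroup H G" "subgroup K G" "subgroup L G" "K \<subseteq> H" "L \<subseteq> H" "D \<in> dcosets G H K L"
  shows "rep D \<in> H"
proof -
  obtain g where g: "g \<in> H" "D = {k \<otimes> g \<otimes> l | k l. k \<in> K \<and> l \<in> L}"
    using assms(6) unfolding dcosets_def by blast
  then have "\<one> \<otimes> g \<otimes> \<one> \<in> D"
    using assms(2,3) by (blast intro: subgroup.one_closed)
  then have "rep D \<in> D"
    by (intro rep_mem) blast
  then show ?thesis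
    using dcoset_subset[OF assms(1,4,5,6)] by blast
qed

lemma finite_dcosets:
  assumes "finite (carrier G)" "subgroup H G" "K \<subseteq> H" "L \<subseteq> H"
  shows "finite (dcosets G H K L)"
proof -
  have "dcosets G H K L \<subseteq> Pow H"
    using dcoset_subset[OF assms(2-4)] by blast
  then show ?thesis
    using assms(1) subgroup.subset[OF assms(2)] by (meson finite_Pow_iff finite_subset)
qed

lemma dcosets_nonempty: "subgroup H G \<Longrightarrow> dcosets G H K L \<noteq> {}"
  unfolding dcosets_def by (blast dest: subgroup.one_closed)

lemma subgroup_hstab:
  assumes "subgroup H G" "action_on G H A Y" "y \<in> Y"
  shows "subgroup (hstab H A y) G"
proof (rule subgroupI)
  show "hstab H A y \<subseteq> carrier G"
    unfolding hstab_def using subgroup.subset[OF assms(1)] by blast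
  show "hstab H A y \<noteq> {}"
    using assms subgroup.one_closed[OF assms(1)] unfolding hstab_def action_on_def by auto
next
  fix a assume "a \<in> hstab H A y"
  then have a: "a \<in> H" "A a y = y"
    unfolding hstab_def by auto
  then have "A (inv a) y = A (inv a \<otimes> a) y"
    using assms subgroup.m_inv_closed[OF assms(1)] unfolding action_on_def by auto
  then show "inv a \<in> hstab H A y"
    using a assms subgroup.m_inv_closed[OF assms(1)] subgroup.mem_carrier[OF assms(1)]
    unfolding hstab_def action_on_def by auto
next
  fix a b assume "a \<in> hstab H A y" "b \<in> hstab H A y"
  then show "a \<otimes> b \<in> hstab H A y"
    using assms subgroup.m_closed[OF assms(1)] unfolding hstab_def action_on_def by auto
qed

lemma rep_horbit:
  assumes "subgroup H G" "action_on G H A Y" "Orb \<in> horbits H A Y"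
  shows "rep Orb \<in> Y"
proof -
  obtain y where y: "y \<in> Y" "Orb = {A g y | g. g \<in> H}"
    using assms(3) unfolding horbits_def by blast
  then have "Orb \<noteq> {}"
    using subgroup.one_closed[OF assms(1)] by blast
  then show ?thesis
    using rep_mem[of Orb] y assms(2) unfolding action_on_def by auto
qed

lemma lcos_subset_carrier:
  assumes "subgroup H G" "subgroup K G" "c \<in> lcos G H K"
  shows "c \<subseteq> carrier G"
proof -
  obtain x where "x \<in> H" "c = l_coset G x K"
    using assms(3) unfolding lcos_def by blast
  then show ?thesis
    using assms l_coset_subset_G subgroup.subset subgroup.mem_carrier by metis
qed

lemma lcos_closed:
  assumes "subgroup H G" "subgroup K G" "c \<in> lcos G H K" "h \<in> H"
  shows "l_coset G h c \<in> lcos G H K"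
proof -
  obtain x where x: "x \<in> H" "c = l_coset G x K"
    using assms(3) unfolding lcos_def by blast
  then have "l_coset G h c = l_coset G (h \<otimes> x) K"
    using assms by (simp add: lcos_m_assoc subgroup.subset subgroup.mem_carrier)
  then show ?thesis
    unfolding lcos_def using subgroup.m_closed[OF assms(1) assms(4) x(1)] by blast
qed

lemma sect_value_rep:
  assumes "s \<in> sects G H K L" "c \<in> lcos G H K"
  shows "(SOME y. y \<in> H \<and> s c = l_coset G y L) \<in> H"
proof -
  let ?P = "\<lambda>y. y \<in> H \<and> s c = l_coset G y L"
  have "s c \<in> lcos G H L"
    using assms unfolding sects_def by blast
  then obtain y where "?P y"
    unfolding lcos_def by blast
  then have "?P (SOME y. ?P y)"
    by (rule someI)
  then show ?thesis
    by blast
qed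

lemma action_on_bact:
  assumes H: "subgroup H G" and K: "subgroup K G"
  shows "action_on G H (bact G H K) (bfuns G H K)"
  unfolding action_on_def
proof (intro conjI ballI)
  fix g f show "bact G H K g f \<in> bfuns G H K"
    unfolding bact_def bfuns_def by auto
next
  fix f assume "f \<in> bfuns G H K"
  then show "bact G H K \<one> f = f"
    using lcos_subset_carrier[OF H K] unfolding bact_def bfuns_def
    by (intro ext) (auto simp: lcos_mult_one PiE_def extensional_def)
next
  fix g h f assume g: "g \<in> H" and h: "h \<in> H"
  have "l_coset G (inv (g \<otimes> h)) c = l_coset G (inv h) (l_coset G (inv g) c)
        \<and> l_coset G (inv g) c \<in> lcos G H K" if "c \<in> lcos G H K" for c
    using g h lcos_subset_carrier[OF H K that] lcos_closed[OF H K that subgroup.m_inv_closed[OF H g]]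
    by (simp add: inv_mult_group lcos_m_assoc subgroup.mem_carrier[OF H])
  then show "bact G H K (g \<otimes> h) f = bact G H K g (bact G H K h f)"
    unfolding bact_def by (intro restrict_ext) simp
qed

lemma sact_mem_sects:
  assumes H: "subgroup H G" and K: "subgroup K G" and L: "subgroup L G"
    and g: "g \<in> H" and s: "s \<in> sects G H K L"
  shows "sact G H K g s \<in> sects G H K L"
proof -
  have inv_c: "l_coset G (inv g) c \<in> lcos G H K" if "c \<in> lcos G H K" for c
    using lcos_closed[OF H K that subgroup.m_inv_closed[OF H g]] .
  have "l_coset G g (s (l_coset G (inv g) c)) \<subseteq> c" if c: "c \<in> lcos G H K" for c
  proof -
    have "l_coset G g (s (l_coset G (inv g) c)) \<subseteq> l_coset G g (l_coset G (inv g) c)"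
      using s inv_c[OF c] unfolding sects_def l_coset_def by blast
    also have "\<dots> = c"
      using g lcos_subset_carrier[OF H K c]
      by (simp add: lcos_m_assoc lcos_mult_one subgroup.mem_carrier[OF H])
    finally show ?thesis .
  qed
  moreover have "l_coset G g (s (l_coset G (inv g) c)) \<in> lcos G H L" if c: "c \<in> lcos G H K" for c
    using s inv_c[OF c] lcos_closed[OF H L _ g] unfolding sects_def by blast
  ultimately show ?thesis
    using s unfolding sects_def sact_def by auto
qed

lemma action_on_sact:
  assumes H: "subgroup H G" and K: "subgroup K G" and L: "subgroup L G"
  shows "action_on G H (sact G H K) (sects G H K L)"
  unfolding action_on_def
proof (intro conjI ballI)
  fix g s assume "g \<in> H" "s \<in> sects G H K L"
  then show "sact G H K g s \<in> sects G H K L"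
    by (rule sact_mem_sects[OF H K L])
next
  fix s assume s: "s \<in> sects G H K L"
  then have "s c \<subseteq> carrier G" if "c \<in> lcos G H K" for c
    using that lcos_subset_carrier[OF H L] unfolding sects_def by blast
  with s show "sact G H K \<one> s = s"
    using lcos_subset_carrier[OF H K] unfolding sact_def sects_def
    by (intro ext) (auto simp: lcos_mult_one PiE_def extensional_def)
next
  fix g h s assume g: "g \<in> H" and h: "h \<in> H" and s: "s \<in> sects G H K L"
  have gc: "g \<in> carrier G" and hc: "h \<in> carrier G"
    using g h subgroup.mem_carrier[OF H] by auto
  have "l_coset G (g \<otimes> h) (s (l_coset G (inv (g \<otimes> h)) c))
        = l_coset G g (sact G H K h s (l_coset G (inv g) c))" if c: "c \<in> lcos G H K" for c
  proof -
    have ic: "l_coset G (inv g) c \<in> lcos G H K" "l_coset G (inv h) (l_coset G (inv g) c) \<in> lcos G H K"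
      using lcos_closed[OF H K _ subgroup.m_inv_closed[OF H]] c g h by blast+
    have "s (l_coset G (inv h) (l_coset G (inv g) c)) \<subseteq> carrier G"
      using s ic lcos_subset_carrier[OF H L] unfolding sects_def by blast
    moreover have "l_coset G (inv (g \<otimes> h)) c = l_coset G (inv h) (l_coset G (inv g) c)"
      using gc hc lcos_subset_carrier[OF H K c] by (simp add: inv_mult_group lcos_m_assoc)
    ultimately show ?thesis
      using ic gc hc unfolding sact_def by (simp add: lcos_m_assoc)
  qed
  then show "sact G H K (g \<otimes> h) s = sact G H K g (sact G H K h s)"
    unfolding sact_def by (intro restrict_ext) simp
qed

end

section \<open>Tambara functors\<close>

locale tambara = group G for G :: "'g monoid" +
  fixes T :: "('g,'a) tambara_data"
  assumes finite_carrier: "finite (carrier G)" and is_tambara: "is_tambara G T"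
begin

lemma cring_tlev: "subgroup H G \<Longrightarrow> cring (tlev T H)"
  using is_tambara unfolding is_tambara_def by (elim conjE) blast

lemma ring_tlev: "subgroup H G \<Longrightarrow> ring (tlev T H)"
  using cring_tlev cring.axioms(1) by blast

lemma ring_hom_tres: "subgroup K G \<Longrightarrow> subgroup H G \<Longrightarrow> K \<subseteq> H \<Longrightarrow> tres T K H \<in> ring_hom (tlev T H) (tlev T K)"
  using is_tambara unfolding is_tambara_def by (elim conjE) blast

lemma tres_id: "subgroup H G \<Longrightarrow> x \<in> carrier (tlev T H) \<Longrightarrow> tres T H H x = x"
  using is_tambara unfolding is_tambara_def by (elim conjE) blast

lemma ttr_closed: "subgroup K G \<Longrightarrow> subgroup H G \<Longrightarrow> K \<subseteq> H \<Longrightarrow> x \<in> carrier (tlev T K) \<Longrightarrow>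
    ttr T K H x \<in> carrier (tlev T H)"
  using is_tambara unfolding is_tambara_def by (elim conjE) fastforce

lemma ttr_add: "subgroup K G \<Longrightarrow> subgroup H G \<Longrightarrow> K \<subseteq> H \<Longrightarrow> x \<in> carrier (tlev T K) \<Longrightarrow> y \<in> carrier (tlev T K) \<Longrightarrow>
    ttr T K H (x \<oplus>\<^bsub>tlev T K\<^esub> y) = ttr T K H x \<oplus>\<^bsub>tlev T H\<^esub> ttr T K H y"
  using is_tambara unfolding is_tambara_def by (elim conjE) fastforce

lemma ttr_id: "subgroup H G \<Longrightarrow> x \<in> carrier (tlev T H) \<Longrightarrow> ttr T H H x = x"
  using is_tambara unfolding is_tambara_def by (elim conjE) fastforce

lemma ttr_ttr: "subgroup L G \<Longrightarrow> subgroup K G \<Longrightarrow> subgroup H G \<Longrightarrow> L \<subseteq> K \<Longrightarrow> K \<subseteq> H \<Longrightarrow>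
    x \<in> carrier (tlev T L) \<Longrightarrow> ttr T K H (ttr T L K x) = ttr T L H x"
  using is_tambara unfolding is_tambara_def by (elim conjE) fastforce

lemma tnm_closed: "subgroup K G \<Longrightarrow> subgroup H G \<Longrightarrow> K \<subseteq> H \<Longrightarrow> x \<in> carrier (tlev T K) \<Longrightarrow>
    tnm T K H x \<in> carrier (tlev T H)"
  using is_tambara unfolding is_tambara_def by (elim conjE) fastforce

lemma tnm_mult: "subgroup K G \<Longrightarrow> subgroup H G \<Longrightarrow> K \<subseteq> H \<Longrightarrow> x \<in> carrier (tlev T K) \<Longrightarrow> y \<in> carrier (tlev T K) \<Longrightarrow>
    tnm T K H (x \<otimes>\<^bsub>tlev T K\<^esub> y) = tnm T K H x \<otimes>\<^bsub>tlev T H\<^esub> tnm T K H y"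
  using is_tambara unfolding is_tambara_def by (elim conjE) fastforce

lemma tnm_zero: "subgroup K G \<Longrightarrow> subgroup H G \<Longrightarrow> K \<subseteq> H \<Longrightarrow> tnm T K H \<zero>\<^bsub>tlev T K\<^esub> = \<zero>\<^bsub>tlev T H\<^esub>"
  using is_tambara unfolding is_tambara_def by (elim conjE) fastforce

lemma ring_hom_tcj: "subgroup H G \<Longrightarrow> g \<in> carrier G \<Longrightarrow> tcj T g H \<in> ring_hom (tlev T H) (tlev T (conjg G g H))"
  using is_tambara unfolding is_tambara_def by (elim conjE) fastforce

lemma tcj_ttr: "subgroup K G \<Longrightarrow> subgroup H G \<Longrightarrow> K \<subseteq> H \<Longrightarrow> g \<in> carrier G \<Longrightarrow> x \<in> carrier (tlev T K) \<Longrightarrow>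
    tcj T g H (ttr T K H x) = ttr T (conjg G g K) (conjg G g H) (tcj T g K x)"
  using is_tambara unfolding is_tambara_def by (elim conjE) fastforce

lemma tcj_tnm: "subgroup K G \<Longrightarrow> subgroup H G \<Longrightarrow> K \<subseteq> H \<Longrightarrow> g \<in> carrier G \<Longrightarrow> x \<in> carrier (tlev T K) \<Longrightarrow>
    tcj T g H (tnm T K H x) = tnm T (conjg G g K) (conjg G g H) (tcj T g K x)"
  using is_tambara unfolding is_tambara_def by (elim conjE) fastforce

lemma ttr_frobenius: "subgroup K G \<Longrightarrow> subgroup H G \<Longrightarrow> K \<subseteq> H \<Longrightarrow> a \<in> carrier (tlev T K) \<Longrightarrow> b \<in> carrier (tlev T H) \<Longrightarrow>
    ttr T K H a \<otimes>\<^bsub>tlev T H\<^esub> b = ttr T K H (a \<otimes>\<^bsub>tlev T K\<^esub> tres T K H b)"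
  using is_tambara unfolding is_tambara_def by (elim conjE) fastforce

text \<open>The summand of the Mackey and exponential formulas for the double coset of \<open>x\<close>;
  it lies in \<open>T(K \<inter> xLx\<inverse>)\<close>.\<close>
abbreviation conj_res :: "'g \<Rightarrow> 'g set \<Rightarrow> 'g set \<Rightarrow> 'a \<Rightarrow> 'a" where
  "conj_res x K L a \<equiv>
     tcj T x (conjg G (inv\<^bsub>G\<^esub> x) K \<inter> L) (tres T (conjg G (inv\<^bsub>G\<^esub> x) K \<inter> L) L a)"

lemma tres_ttr:
  "subgroup K G \<Longrightarrow> subgroup L G \<Longrightarrow> subgroup H G \<Longrightarrow> K \<subseteq> H \<Longrightarrow> L \<subseteq> H \<Longrightarrow> a \<in> carrier (tlev T L) \<Longrightarrow>
    tres T K H (ttr T L H a) =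
      (\<Oplus>\<^bsub>tlev T K\<^esub>D \<in> dcosets G H K L. ttr T (K \<inter> conjg G (rep D) L) K (conj_res (rep D) K L a))"
  using is_tambara unfolding is_tambara_def by (elim conjE) fastforce

lemma tnm_add:
  "subgroup K G \<Longrightarrow> subgroup H G \<Longrightarrow> K \<subseteq> H \<Longrightarrow> a \<in> carrier (tlev T K) \<Longrightarrow> b \<in> carrier (tlev T K) \<Longrightarrow>
    tnm T K H (a \<oplus>\<^bsub>tlev T K\<^esub> b) =
      (\<Oplus>\<^bsub>tlev T H\<^esub>Orb \<in> horbits H (bact G H K) (bfuns G H K).
         let f = rep Orb; Hf = hstab H (bact G H K) f in
         ttr T Hf H (\<Otimes>\<^bsub>tlev T Hf\<^esub>D \<in> dcosets G H Hf K.
           tnm T (Hf \<inter> conjg G (rep D) K) Hf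
             (conj_res (rep D) Hf K (if f (l_coset G (rep D) K) then a else b))))"
  using is_tambara unfolding is_tambara_def by (elim conjE) (simp add: Let_def)

lemma tnm_ttr:
  "subgroup L G \<Longrightarrow> subgroup K G \<Longrightarrow> subgroup H G \<Longrightarrow> L \<subseteq> K \<Longrightarrow> K \<subseteq> H \<Longrightarrow> a \<in> carrier (tlev T L) \<Longrightarrow>
    tnm T K H (ttr T L K a) =
      (\<Oplus>\<^bsub>tlev T H\<^esub>Orb \<in> horbits H (sact G H K) (sects G H K L).
         let s = rep Orb; Hs = hstab H (sact G H K) s in
         ttr T Hs H (\<Otimes>\<^bsub>tlev T Hs\<^esub>D \<in> dcosets G H Hs K.
           let y = SOME y. y \<in> H \<and> s (l_coset G (rep D) K) = l_coset G y L in
           tnm T (Hs \<inter> conjg G y L) Hs (conj_res y Hs L a)))"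
  using is_tambara unfolding is_tambara_def by (elim conjE) fastforce

lemma tres_closed: "subgroup K G \<Longrightarrow> subgroup H G \<Longrightarrow> K \<subseteq> H \<Longrightarrow> x \<in> carrier (tlev T H) \<Longrightarrow>
    tres T K H x \<in> carrier (tlev T K)"
  using ring_hom_tres by (rule ring_hom_closed)

lemma tcj_closed: "subgroup H G \<Longrightarrow> g \<in> carrier G \<Longrightarrow> x \<in> carrier (tlev T H) \<Longrightarrow>
    tcj T g H x \<in> carrier (tlev T (conjg G g H))"
  using ring_hom_tcj by (rule ring_hom_closed)

lemma tres_zero: "subgroup K G \<Longrightarrow> subgroup H G \<Longrightarrow> K \<subseteq> H \<Longrightarrow> tres T K H \<zero>\<^bsub>tlev T H\<^esub> = \<zero>\<^bsub>tlev T K\<^esub>"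
  by (rule ring_hom_zero[OF ring_hom_tres ring_tlev ring_tlev])

lemma tres_add: "subgroup K G \<Longrightarrow> subgroup H G \<Longrightarrow> K \<subseteq> H \<Longrightarrow> x \<in> carrier (tlev T H) \<Longrightarrow> y \<in> carrier (tlev T H) \<Longrightarrow>
    tres T K H (x \<oplus>\<^bsub>tlev T H\<^esub> y) = tres T K H x \<oplus>\<^bsub>tlev T K\<^esub> tres T K H y"
  using ring_hom_tres by (rule ring_hom_add)

lemma tres_mult: "subgroup K G \<Longrightarrow> subgroup H G \<Longrightarrow> K \<subseteq> H \<Longrightarrow> x \<in> carrier (tlev T H) \<Longrightarrow> y \<in> carrier (tlev T H) \<Longrightarrow>
    tres T K H (x \<otimes>\<^bsub>tlev T H\<^esub> y) = tres T K H x \<otimes>\<^bsub>tlev T K\<^esub> tres T K H y"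
  using ring_hom_tres by (rule ring_hom_mult)

lemma tcj_zero: "subgroup H G \<Longrightarrow> g \<in> carrier G \<Longrightarrow> tcj T g H \<zero>\<^bsub>tlev T H\<^esub> = \<zero>\<^bsub>tlev T (conjg G g H)\<^esub>"
  by (rule ring_hom_zero[OF ring_hom_tcj ring_tlev ring_tlev[OF subgroup_conjg]])

lemma tcj_add: "subgroup H G \<Longrightarrow> g \<in> carrier G \<Longrightarrow> x \<in> carrier (tlev T H) \<Longrightarrow> y \<in> carrier (tlev T H) \<Longrightarrow>
    tcj T g H (x \<oplus>\<^bsub>tlev T H\<^esub> y) = tcj T g H x \<oplus>\<^bsub>tlev T (conjg G g H)\<^esub> tcj T g H y"
  using ring_hom_tcj by (rule ring_hom_add)

lemma tcj_mult: "subgroup H G \<Longrightarrow> g \<in> carrier G \<Longrightarrow> x \<in> carrier (tlev T H) \<Longrightarrow> y \<in> carrier (tlev T H) \<Longrightarrow>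
    tcj T g H (x \<otimes>\<^bsub>tlev T H\<^esub> y) = tcj T g H x \<otimes>\<^bsub>tlev T (conjg G g H)\<^esub> tcj T g H y"
  using ring_hom_tcj by (rule ring_hom_mult)

lemma ttr_zero:
  assumes "subgroup K G" "subgroup H G" "K \<subseteq> H"
  shows "ttr T K H \<zero>\<^bsub>tlev T K\<^esub> = \<zero>\<^bsub>tlev T H\<^esub>"
proof -
  interpret K: cring "tlev T K" using cring_tlev assms(1) .
  interpret H: cring "tlev T H" using cring_tlev assms(2) .
  have "ttr T K H \<zero>\<^bsub>tlev T K\<^esub> \<oplus>\<^bsub>tlev T H\<^esub> ttr T K H \<zero>\<^bsub>tlev T K\<^esub> = ttr T K H \<zero>\<^bsub>tlev T K\<^esub>"
    using ttr_add[OF assms K.zero_closed K.zero_closed] by simp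
  then show ?thesis
    using ttr_closed[OF assms K.zero_closed] by (simp add: H.add.l_cancel_one')
qed

lemma ttr_frobenius_left:
  assumes "subgroup K G" "subgroup H G" "K \<subseteq> H" "a \<in> carrier (tlev T K)" "b \<in> carrier (tlev T H)"
  shows "b \<otimes>\<^bsub>tlev T H\<^esub> ttr T K H a = ttr T K H (tres T K H b \<otimes>\<^bsub>tlev T K\<^esub> a)"
proof -
  interpret K: cring "tlev T K" using cring_tlev assms(1) .
  interpret H: cring "tlev T H" using cring_tlev assms(2) .
  have "b \<otimes>\<^bsub>tlev T H\<^esub> ttr T K H a = ttr T K H a \<otimes>\<^bsub>tlev T H\<^esub> b"
    by (rule H.m_comm[OF assms(5) ttr_closed[OF assms(1-4)]])
  also have "\<dots> = ttr T K H (a \<otimes>\<^bsub>tlev T K\<^esub> tres T K H b)"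
    by (rule ttr_frobenius[OF assms])
  also have "a \<otimes>\<^bsub>tlev T K\<^esub> tres T K H b = tres T K H b \<otimes>\<^bsub>tlev T K\<^esub> a"
    by (rule K.m_comm[OF assms(4) tres_closed[OF assms(1-3,5)]])
  finally show ?thesis .
qed

end

section \<open>Tambara ideals\<close>

lemma (in cring) ideal_by_closure:
  assumes "I \<subseteq> carrier R" "\<zero> \<in> I"
    and "\<And>a b. a \<in> I \<Longrightarrow> b \<in> I \<Longrightarrow> a \<oplus> b \<in> I"
    and "\<And>a x. a \<in> I \<Longrightarrow> x \<in> carrier R \<Longrightarrow> a \<otimes> x \<in> I"
  shows "ideal I R"
proof -
  have "\<ominus> a \<in> I" if "a \<in> I" for a
  proof -
    have "a \<otimes> (\<ominus> \<one>) \<in> I"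
      using assms(4) that by simp
    then show ?thesis
      using assms(1) that by (auto simp: r_minus)
  qed
  then have "subgroup I (add_monoid R)"
    using assms(1-3) by (intro add.subgroupI) (auto simp: a_inv_def)
  then show ?thesis
    using assms(1,4) by (intro idealI ring_axioms) (auto simp: m_comm subset_iff)
qed

lemma tideal_ideal: "is_tideal G T I \<Longrightarrow> subgroup H G \<Longrightarrow> ideal (I H) (tlev T H)"
  unfolding is_tideal_def by (elim conjE) fastforce

lemma tideal_tres: "is_tideal G T I \<Longrightarrow> subgroup K G \<Longrightarrow> subgroup H G \<Longrightarrow> K \<subseteq> H \<Longrightarrow> x \<in> I H \<Longrightarrow>
    tres T K H x \<in> I K"
  unfolding is_tideal_def by (elim conjE) fastforce

lemma tideal_ttr: "is_tideal G T I \<Longrightarrow> subgroup K G \<Longrightarrow> subgroup H G \<Longrightarrow> K \<subseteq> H \<Longrightarrow> x \<in> I K \<Longrightarrow>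
    ttr T K H x \<in> I H"
  unfolding is_tideal_def by (elim conjE) fastforce

lemma tideal_tnm: "is_tideal G T I \<Longrightarrow> subgroup K G \<Longrightarrow> subgroup H G \<Longrightarrow> K \<subseteq> H \<Longrightarrow> x \<in> I K \<Longrightarrow>
    tnm T K H x \<in> I H"
  unfolding is_tideal_def by (elim conjE) fastforce

lemma tideal_tcj: "is_tideal G T I \<Longrightarrow> subgroup H G \<Longrightarrow> g \<in> carrier G \<Longrightarrow> x \<in> I H \<Longrightarrow>
    tcj T g H x \<in> I (conjg G g H)"
  unfolding is_tideal_def by (elim conjE) fastforce

lemma tideal_subset: "is_tideal G T I \<Longrightarrow> subgroup H G \<Longrightarrow> I H \<subseteq> carrier (tlev T H)"
  by (rule additive_subgroup.a_subset[OF ideal.axioms(1)[OF tideal_ideal]])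

lemma tideal_zero: "is_tideal G T I \<Longrightarrow> subgroup H G \<Longrightarrow> \<zero>\<^bsub>tlev T H\<^esub> \<in> I H"
  by (rule additive_subgroup.zero_closed[OF ideal.axioms(1)[OF tideal_ideal]])

lemma tideal_add: "is_tideal G T I \<Longrightarrow> subgroup H G \<Longrightarrow> a \<in> I H \<Longrightarrow> b \<in> I H \<Longrightarrow> a \<oplus>\<^bsub>tlev T H\<^esub> b \<in> I H"
  by (rule additive_subgroup.a_closed[OF ideal.axioms(1)[OF tideal_ideal]])

lemma tideal_mult: "is_tideal G T I \<Longrightarrow> subgroup H G \<Longrightarrow> a \<in> carrier (tlev T H) \<Longrightarrow> x \<in> I H \<Longrightarrow>
    a \<otimes>\<^bsub>tlev T H\<^esub> x \<in> I H"
  by (rule ideal.I_l_closed[OF tideal_ideal])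

lemma mem_tgen_iff:
  "x \<in> tgen G T A L \<longleftrightarrow> (\<forall>I. is_tideal G T I \<and> (\<forall>M. subgroup M G \<longrightarrow> A M \<subseteq> I M) \<longrightarrow> x \<in> I L)"
  unfolding tgen_def by auto

lemma tgen_least:
  "is_tideal G T I \<Longrightarrow> (\<And>M. subgroup M G \<Longrightarrow> A M \<subseteq> I M) \<Longrightarrow> tgen G T A L \<subseteq> I L"
  unfolding mem_tgen_iff subset_iff by blast

lemma tgen_superset: "subgroup L G \<Longrightarrow> A L \<subseteq> tgen G T A L"
  unfolding mem_tgen_iff subset_iff by blast

lemma tgen_closed_under:
  assumes "\<And>I y. is_tideal G T I \<Longrightarrow> y \<in> I H \<Longrightarrow> f y \<in> I K" "x \<in> tgen G T A H"
  shows "f x \<in> tgen G T A K"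
  using assms unfolding mem_tgen_iff by blast

lemma tgen1_least: "is_tideal G T I \<Longrightarrow> x \<in> I H \<Longrightarrow> tgen1 G T H x L \<subseteq> I L"
  unfolding tgen1_def by (rule tgen_least) auto

lemma mem_tgen1: "subgroup H G \<Longrightarrow> x \<in> tgen1 G T H x H"
  unfolding tgen1_def using tgen_superset[of H G "\<lambda>L. if L = H then {x} else {}"] by simp

lemma tprod_least:
  assumes "is_tideal G T R" "\<And>M a b. subgroup M G \<Longrightarrow> a \<in> I M \<Longrightarrow> b \<in> J M \<Longrightarrow> a \<otimes>\<^bsub>tlev T M\<^esub> b \<in> R M"
  shows "tprod G T I J L \<subseteq> R L"
  unfolding tprod_def using assms(2) by (intro tgen_least[OF assms(1)]) blast

lemma mult_mem_tprod:
  "subgroup L G \<Longrightarrow> a \<in> I L \<Longrightarrow> b \<in> J L \<Longrightarrow> a \<otimes>\<^bsub>tlev T L\<^esub> b \<in> tprod G T I J L"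
  unfolding tprod_def by (rule subsetD[OF tgen_superset]) blast+

context tambara
begin

lemma carrier_tideal: "is_tideal G T (\<lambda>L. carrier (tlev T L))"
  unfolding is_tideal_def
proof (intro conjI allI impI ballI)
  fix H assume "subgroup H G"
  then show "ideal (carrier (tlev T H)) (tlev T H)"
    by (rule ring.oneideal[OF ring_tlev])
qed (auto intro: tres_closed ttr_closed tnm_closed tcj_closed)

lemma tgen_tideal:
  assumes "\<And>L. subgroup L G \<Longrightarrow> A L \<subseteq> carrier (tlev T L)"
  shows "is_tideal G T (tgen G T A)"
  unfolding is_tideal_def
proof (intro conjI allI impI ballI)
  fix H assume H: "subgroup H G"
  let ?\<I> = "{I H | I. is_tideal G T I \<and> (\<forall>M. subgroup M G \<longrightarrow> A M \<subseteq> I M)}"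
  have "carrier (tlev T H) \<in> ?\<I>"
    using carrier_tideal assms by (intro CollectI exI[of _ "\<lambda>L. carrier (tlev T L)"]) simp
  moreover have "ideal J (tlev T H)" if "J \<in> ?\<I>" for J
    using that tideal_ideal[OF _ H] by auto
  ultimately have "ideal (\<Inter>?\<I>) (tlev T H)"
    by (intro ring.i_Intersect[OF ring_tlev[OF H]]) auto
  then show "ideal (tgen G T A H) (tlev T H)"
    unfolding tgen_def by simp
next
  fix K H x assume KH: "subgroup K G" "subgroup H G" "K \<subseteq> H"
  show "x \<in> tgen G T A H \<Longrightarrow> tres T K H x \<in> tgen G T A K"
    by (rule tgen_closed_under[OF tideal_tres[OF _ KH]])
  show "x \<in> tgen G T A K \<Longrightarrow> ttr T K H x \<in> tgen G T A H"
    by (rule tgen_closed_under[OF tideal_ttr[OF _ KH]])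
  show "x \<in> tgen G T A K \<Longrightarrow> tnm T K H x \<in> tgen G T A H"
    by (rule tgen_closed_under[OF tideal_tnm[OF _ KH]])
next
  fix H g x assume Hg: "subgroup H G" "g \<in> carrier G"
  show "x \<in> tgen G T A H \<Longrightarrow> tcj T g H x \<in> tgen G T A (conjg G g H)"
    by (rule tgen_closed_under[OF tideal_tcj[OF _ Hg]])
qed

lemma tgen1_tideal: "subgroup H G \<Longrightarrow> x \<in> carrier (tlev T H) \<Longrightarrow> is_tideal G T (tgen1 G T H x)"
  unfolding tgen1_def by (rule tgen_tideal) auto

lemma tprod_tideal:
  assumes "is_tideal G T I" "is_tideal G T J"
  shows "is_tideal G T (tprod G T I J)"
  unfolding tprod_def
proof (rule tgen_tideal)
  fix L assume L: "subgroup L G"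
  interpret L: cring "tlev T L" using cring_tlev L .
  show "{a \<otimes>\<^bsub>tlev T L\<^esub> b |a b. a \<in> I L \<and> b \<in> J L} \<subseteq> carrier (tlev T L)"
    using tideal_subset[OF assms(1) L] tideal_subset[OF assms(2) L] by blast
qed

lemma tpow_tideal: "is_tideal G T I \<Longrightarrow> is_tideal G T (tpow G T I n)"
  by (induction n) (simp_all add: carrier_tideal tprod_tideal)

lemma tprod_mono:
  assumes "is_tideal G T I'" "is_tideal G T J'"
    and "\<And>M. subgroup M G \<Longrightarrow> I M \<subseteq> I' M" "\<And>M. subgroup M G \<Longrightarrow> J M \<subseteq> J' M"
  shows "tprod G T I J L \<subseteq> tprod G T I' J' L"
proof (rule tprod_least[OF tprod_tideal[OF assms(1,2)]])
  fix M a b assume "subgroup M G" "a \<in> I M" "b \<in> J M"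
  then show "a \<otimes>\<^bsub>tlev T M\<^esub> b \<in> tprod G T I' J' M"
    using assms(3,4) by (intro mult_mem_tprod) auto
qed

lemma tideal_subset_tradical:
  assumes I: "is_tideal G T I" and H: "subgroup H G"
  shows "I H \<subseteq> tradical G T I H"
proof
  fix x assume x: "x \<in> I H"
  have "tpow G T (tgen1 G T H x) 1 L \<subseteq> I L" for L
  proof -
    have "a \<otimes>\<^bsub>tlev T M\<^esub> b \<in> I M"
      if "subgroup M G" "a \<in> carrier (tlev T M)" "b \<in> tgen1 G T H x M" for M a b
      using that tgen1_least[OF I x] tideal_mult[OF I] by blast
    then show ?thesis
      by (simp add: tprod_least[OF I])
  qed
  then have "1 \<le> (1::nat) \<and> (\<forall>L. subgroup L G \<longrightarrow> tpow G T (tgen1 G T H x) 1 L \<subseteq> I L)"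
    by blast
  then show "x \<in> tradical G T I H"
    unfolding tradical_def using x tideal_subset[OF I H] by blast
qed

end

section \<open>Tambara ideals generated by norm-stable families\<close>

text \<open>A norm-stable family need not be closed under addition. The Tambara ideal it generates
  consists of the sums of transfers of its members; the exponential formulas are what make this
  set closed under norms.\<close>

locale norm_stable_family = tambara G T for G :: "'g monoid" (structure) and T :: "('g,'a) tambara_data" +
  fixes Z :: "'g set \<Rightarrow> 'a set"
  assumes family_subset: "subgroup L G \<Longrightarrow> Z L \<subseteq> carrier (tlev T L)"
    and family_tres: "subgroup K G \<Longrightarrow> subgroup L G \<Longrightarrow> K \<subseteq> L \<Longrightarrow> z \<in> Z L \<Longrightarrow> tres T K L z \<in> Z K"
    and family_tcj: "subgroup L G \<Longrightarrow> g \<in> carrier G \<Longrightarrow> z \<in> Z L \<Longrightarrow> tcj T g L z \<in> Z (conjg G g L)"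
    and family_tnm: "subgroup K G \<Longrightarrow> subgroup L G \<Longrightarrow> K \<subseteq> L \<Longrightarrow> z \<in> Z K \<Longrightarrow> tnm T K L z \<in> Z L"
    and family_mult: "subgroup L G \<Longrightarrow> z \<in> Z L \<Longrightarrow> s \<in> carrier (tlev T L) \<Longrightarrow> z \<otimes>\<^bsub>tlev T L\<^esub> s \<in> Z L"
begin

inductive trsum :: "'g set \<Rightarrow> 'a \<Rightarrow> bool" where
  trsum_zero: "subgroup L G \<Longrightarrow> trsum L \<zero>\<^bsub>tlev T L\<^esub>"
| trsum_transfer: "subgroup K G \<Longrightarrow> subgroup L G \<Longrightarrow> K \<subseteq> L \<Longrightarrow> z \<in> Z K \<Longrightarrow> trsum L (ttr T K L z)"
| trsum_add: "trsum L a \<Longrightarrow> trsum L b \<Longrightarrow> trsum L (a \<oplus>\<^bsub>tlev T L\<^esub> b)"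

lemma trsum_subgroup: "trsum L v \<Longrightarrow> subgroup L G"
  by (induction rule: trsum.induct) simp_all

lemma trsum_closed: "trsum L v \<Longrightarrow> v \<in> carrier (tlev T L)"
proof (induction rule: trsum.induct)
  case (trsum_zero L)
  then show ?case by (intro ring.ring_simprules(2) ring_tlev)
next
  case (trsum_transfer K L z)
  then show ?case using family_subset[OF trsum_transfer(1)] by (intro ttr_closed) auto
next
  case (trsum_add L a b)
  then show ?case by (intro ring.ring_simprules(1) ring_tlev trsum_subgroup)
qed

lemma trsum_family:
  assumes "subgroup L G" "z \<in> Z L"
  shows "trsum L z"
proof -
  have "ttr T L L z = z"
    using assms family_subset by (intro ttr_id) auto
  then show ?thesis
    using trsum_transfer[OF assms(1) assms(1) order_refl assms(2)] by simp
qed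

lemma family_conj_res:
  assumes "subgroup K G" "subgroup L G" "x \<in> carrier G" "z \<in> Z L"
  shows "conj_res x K L z \<in> Z (K \<inter> conjg G x L)"
proof -
  let ?W = "conjg G (inv x) K \<inter> L"
  have W: "subgroup ?W G"
    using assms by (simp add: subgroup_conjg_Int)
  then have "conj_res x K L z \<in> Z (conjg G x ?W)"
    using assms by (intro family_tcj family_tres) auto
  then show ?thesis
    using assms by (simp add: conjg_inv_Int subgroup.subset)
qed

lemma family_finprod:
  assumes "subgroup L G" "finite I" "I \<noteq> {}" "\<And>i. i \<in> I \<Longrightarrow> f i \<in> Z L"
  shows "finprod (tlev T L) f I \<in> Z L"
  using assms(2-4)
proof (induction I rule: finite_ne_induct)
  interpret L: cring "tlev T L" using cring_tlev assms(1) .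
  case (singleton x)
  then show ?case using family_subset[OF assms(1)] by auto
next
  interpret L: cring "tlev T L" using cring_tlev assms(1) .
  case (insert x F)
  then have "f \<in> F \<rightarrow> carrier (tlev T L)" "f x \<in> carrier (tlev T L)"
    using family_subset[OF assms(1)] by blast+
  with insert show ?case
    using family_mult[OF assms(1)] by (simp add: L.m_comm L.finprod_closed)
qed

lemma trsum_finsum:
  assumes "subgroup L G" "\<And>i. i \<in> I \<Longrightarrow> trsum L (f i)"
  shows "trsum L (finsum (tlev T L) f I)"
  using assms(2)
proof (induction I rule: infinite_finite_induct)
  interpret L: cring "tlev T L" using cring_tlev assms(1) .
  case (infinite I)
  then show ?case using trsum_zero[OF assms(1)] by simp
next
  interpret L: cring "tlev T L" using cring_tlev assms(1) .
  case empty
  then show ?case using trsum_zero[OF assms(1)] by simp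
next
  interpret L: cring "tlev T L" using cring_tlev assms(1) .
  case (insert x F)
  then have "f \<in> F \<rightarrow> carrier (tlev T L)" "f x \<in> carrier (tlev T L)"
    using trsum_closed by blast+
  with insert show ?case by (simp add: trsum_add)
qed

lemma trsum_mult: "trsum L v \<Longrightarrow> s \<in> carrier (tlev T L) \<Longrightarrow> trsum L (v \<otimes>\<^bsub>tlev T L\<^esub> s)"
proof (induction arbitrary: s rule: trsum.induct)
  case (trsum_zero L)
  interpret L: cring "tlev T L" using cring_tlev trsum_zero(1) .
  show ?case using trsum.trsum_zero trsum_zero by simp
next
  case (trsum_transfer K L z)
  have "ttr T K L z \<otimes>\<^bsub>tlev T L\<^esub> s = ttr T K L (z \<otimes>\<^bsub>tlev T K\<^esub> tres T K L s)"
    using trsum_transfer family_subset by (intro ttr_frobenius) auto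
  moreover have "z \<otimes>\<^bsub>tlev T K\<^esub> tres T K L s \<in> Z K"
    using trsum_transfer by (intro family_mult tres_closed)
  ultimately show ?case
    using trsum_transfer by (simp add: trsum.trsum_transfer)
next
  case (trsum_add L a b)
  interpret L: cring "tlev T L" using cring_tlev trsum_subgroup[OF trsum_add(1)] .
  show ?case
    using trsum_add trsum_closed by (simp add: L.l_distr trsum.trsum_add)
qed

lemma trsum_finprod:
  assumes "subgroup L G" "finite I" "I \<noteq> {}" "\<And>i. i \<in> I \<Longrightarrow> trsum L (f i)"
  shows "trsum L (finprod (tlev T L) f I)"
  using assms(2-4)
proof (induction I rule: finite_ne_induct)
  interpret L: cring "tlev T L" using cring_tlev assms(1) .
  case (singleton x)
  then show ?case using trsum_closed by auto
next
  interpret L: cring "tlev T L" using cring_tlev assms(1) .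
  case (insert x F)
  then have "f \<in> F \<rightarrow> carrier (tlev T L)" "f x \<in> carrier (tlev T L)"
    using trsum_closed by blast+
  with insert show ?case
    using trsum_mult by (simp add: L.finprod_closed)
qed

lemma trsum_ttr: "trsum K v \<Longrightarrow> subgroup H G \<Longrightarrow> K \<subseteq> H \<Longrightarrow> trsum H (ttr T K H v)"
proof (induction rule: trsum.induct)
  case (trsum_zero K)
  then show ?case using ttr_zero trsum.trsum_zero by metis
next
  case (trsum_transfer L K z)
  then have "ttr T K H (ttr T L K z) = ttr T L H z"
    using family_subset by (intro ttr_ttr) auto
  with trsum_transfer show ?case
    using trsum.trsum_transfer[of L H z] by auto
next
  case (trsum_add K a b)
  then show ?case
    using ttr_add trsum_closed trsum_subgroup trsum.trsum_add by metis
qed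

lemma trsum_tcj: "trsum L v \<Longrightarrow> g \<in> carrier G \<Longrightarrow> trsum (conjg G g L) (tcj T g L v)"
proof (induction rule: trsum.induct)
  case (trsum_zero L)
  then show ?case using tcj_zero trsum.trsum_zero subgroup_conjg by metis
next
  case (trsum_transfer K L z)
  then have "tcj T g L (ttr T K L z) = ttr T (conjg G g K) (conjg G g L) (tcj T g K z)"
    using family_subset by (intro tcj_ttr) auto
  with trsum_transfer show ?case
    using trsum.trsum_transfer subgroup_conjg conjg_mono family_tcj by metis
next
  case (trsum_add L a b)
  then show ?case
    using tcj_add trsum_closed trsum_subgroup trsum.trsum_add by metis
qed

lemma trsum_tres: "trsum H v \<Longrightarrow> subgroup K G \<Longrightarrow> K \<subseteq> H \<Longrightarrow> trsum K (tres T K H v)"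
proof (induction rule: trsum.induct)
  case (trsum_zero H)
  then show ?case using tres_zero trsum.trsum_zero by metis
next
  case (trsum_transfer L H z)
  have "trsum K (ttr T (K \<inter> conjg G (rep D) L) K (conj_res (rep D) K L z))"
    if "D \<in> dcosets G H K L" for D
  proof -
    have "rep D \<in> carrier G"
      using rep_dcoset[OF _ _ _ _ _ that] trsum_transfer subgroup.mem_carrier by metis
    then show ?thesis
      using trsum_transfer family_conj_res subgroup_conjg subgroups_Inter_pair
      by (intro trsum.trsum_transfer) auto
  qed
  moreover have "z \<in> carrier (tlev T L)"
    using trsum_transfer family_subset by blast
  ultimately show ?case
    using trsum_transfer by (subst tres_ttr) (auto intro: trsum_finsum)
next
  case (trsum_add H a b)
  then show ?case
    using tres_add trsum_closed trsum_subgroup trsum.trsum_add by metis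
qed

lemma trsum_tnm_ttr:
  assumes L: "subgroup L G" and K: "subgroup K G" and H: "subgroup H G"
    and LK: "L \<subseteq> K" and KH: "K \<subseteq> H" and z: "z \<in> Z L"
  shows "trsum H (tnm T K H (ttr T L K z))"
proof -
  \<comment> \<open>each summand of the exponential formula transfers a product of norms of members of \<open>Z\<close>\<close>
  have "trsum H (ttr T (hstab H (sact G H K) s) H
          (\<Otimes>\<^bsub>tlev T (hstab H (sact G H K) s)\<^esub>D \<in> dcosets G H (hstab H (sact G H K) s) K.
             let y = SOME y. y \<in> H \<and> s (l_coset G (rep D) K) = l_coset G y L in
             tnm T (hstab H (sact G H K) s \<inter> conjg G y L) (hstab H (sact G H K) s)
               (conj_res y (hstab H (sact G H K) s) L z)))"
    if s: "s \<in> sects G H K L" for s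
  proof -
    let ?Hs = "hstab H (sact G H K) s"
    have Hs: "subgroup ?Hs G" "?Hs \<subseteq> H"
      using subgroup_hstab[OF H action_on_sact[OF H K L] s] unfolding hstab_def by auto
    have factor: "tnm T (?Hs \<inter> conjg G y L) ?Hs (conj_res y ?Hs L z) \<in> Z ?Hs"
      if "y \<in> carrier G" for y
      using that Hs(1) L z by (intro family_tnm family_conj_res subgroups_Inter_pair subgroup_conjg) auto
    have some_in_carrier: "(SOME y. y \<in> H \<and> s (l_coset G (rep D) K) = l_coset G y L) \<in> carrier G"
      if D: "D \<in> dcosets G H ?Hs K" for D
    proof -
      have "l_coset G (rep D) K \<in> lcos G H K"
        using rep_dcoset[OF H Hs(1) K Hs(2) KH D] unfolding lcos_def by blast
      then show ?thesis
        using sect_value_rep[OF s] subgroup.mem_carrier[OF H] by blast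
    qed
    have "(let y = SOME y. y \<in> H \<and> s (l_coset G (rep D) K) = l_coset G y L in
              tnm T (?Hs \<inter> conjg G y L) ?Hs (conj_res y ?Hs L z)) \<in> Z ?Hs"
      if "D \<in> dcosets G H ?Hs K" for D
      unfolding Let_def by (rule factor[OF some_in_carrier[OF that]])
    then show ?thesis
      using Hs H KH finite_dcosets[OF finite_carrier H] dcosets_nonempty[OF H]
      by (intro trsum_transfer family_finprod) auto
  qed
  moreover have "z \<in> carrier (tlev T L)"
    using family_subset[OF L] z by blast
  ultimately show ?thesis
    using assms rep_horbit[OF H action_on_sact[OF H K L]]
    by (subst tnm_ttr) (auto simp: Let_def intro!: trsum_finsum)
qed

lemma trsum_tnm_tcj:
  assumes W: "subgroup W G" and r: "r \<in> carrier (tlev T W)" and x: "x \<in> carrier G"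
    and H: "subgroup H G" and "conjg G x W \<subseteq> H"
    and norm: "\<And>H'. subgroup H' G \<Longrightarrow> W \<subseteq> H' \<Longrightarrow> trsum H' (tnm T W H' r)"
  shows "trsum H (tnm T (conjg G x W) H (tcj T x W r))"
proof -
  let ?H' = "conjg G (inv x) H"
  have H': "subgroup ?H' G" "W \<subseteq> ?H'"
    using assms conjg_mono[OF assms(5), of "inv x"]
    by (auto simp: subgroup_conjg conjg_inv_conjg subgroup.subset)
  have "conjg G x ?H' = H"
    using x H by (simp add: conjg_inv_conjg subgroup.subset)
  then have "tcj T x ?H' (tnm T W ?H' r) = tnm T (conjg G x W) H (tcj T x W r)"
    using tcj_tnm[OF W H'(1) H'(2) x r] by simp
  then show ?thesis
    using trsum_tcj[OF norm[OF H'] x] \<open>conjg G x ?H' = H\<close> by simp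
qed

lemma trsum_tnm_add:
  assumes K: "subgroup K G" and H: "subgroup H G" and KH: "K \<subseteq> H"
    and a: "a \<in> carrier (tlev T K)" and b: "b \<in> carrier (tlev T K)"
    and norm: "\<And>c W H'. c \<in> {a, b} \<Longrightarrow> subgroup W G \<Longrightarrow> W \<subseteq> K \<Longrightarrow> subgroup H' G \<Longrightarrow> W \<subseteq> H' \<Longrightarrow>
                 trsum H' (tnm T W H' (tres T W K c))"
  shows "trsum H (tnm T K H (a \<oplus>\<^bsub>tlev T K\<^esub> b))"
proof -
  have "trsum H (ttr T (hstab H (bact G H K) f) H (\<Otimes>\<^bsub>tlev T (hstab H (bact G H K) f)\<^esub>D \<in> dcosets G H (hstab H (bact G H K) f) K.
           tnm T (hstab H (bact G H K) f \<inter> conjg G (rep D) K) (hstab H (bact G H K) f)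
             (conj_res (rep D) (hstab H (bact G H K) f) K (if f (l_coset G (rep D) K) then a else b))))"
    if f: "f \<in> bfuns G H K" for f
  proof -
    let ?Hf = "hstab H (bact G H K) f"
    have Hf: "subgroup ?Hf G" "?Hf \<subseteq> H"
      using subgroup_hstab[OF H action_on_bact[OF H K] f] unfolding hstab_def by auto
    have "trsum ?Hf (tnm T (?Hf \<inter> conjg G x K) ?Hf (conj_res x ?Hf K c))"
      if x: "x \<in> carrier G" and c: "c \<in> {a, b}" for x c
    proof -
      let ?W = "conjg G (inv x) ?Hf \<inter> K"
      have W: "subgroup ?W G"
        using Hf K x by (simp add: subgroup_conjg_Int)
      have "conjg G x ?W = ?Hf \<inter> conjg G x K"
        using Hf K x by (simp add: conjg_inv_Int subgroup.subset)
      moreover have "trsum ?Hf (tnm T (conjg G x ?W) ?Hf (conj_res x ?Hf K c))"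
        using W x Hf K a b c norm[OF c W]
        by (intro trsum_tnm_tcj tres_closed) (auto simp: conjg_inv_Int subgroup.subset)
      ultimately show ?thesis
        by simp
    qed
    then show ?thesis
      using Hf H K KH finite_dcosets[OF finite_carrier H] dcosets_nonempty[OF H]
        rep_dcoset[OF H Hf(1) K Hf(2) KH] subgroup.mem_carrier[OF H]
      by (intro trsum_ttr trsum_finprod) auto
  qed
  then show ?thesis
    using assms rep_horbit[OF H action_on_bact[OF H K]]
    by (subst tnm_add) (auto simp: Let_def intro!: trsum_finsum)
qed

text \<open>The norm of a sum involves norms of restrictions to proper subgroups, whence the induction
  on the order of the subgroup.\<close>

lemma trsum_tnm: "trsum K v \<Longrightarrow> subgroup H G \<Longrightarrow> K \<subseteq> H \<Longrightarrow> trsum H (tnm T K H v)"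
proof (induction "card K" arbitrary: K v H rule: less_induct)
  case less
  have K: "subgroup K G"
    using trsum_subgroup less.prems(1) .
  have smaller: "trsum H' (tnm T W H' (tres T W K c))"
    if "trsum K c" "subgroup W G" "W \<subset> K" "subgroup H' G" "W \<subseteq> H'" for c W H'
  proof -
    have "card W < card K"
      using finite_subset[OF subgroup.subset[OF K] finite_carrier] that(3) by (rule psubset_card_mono)
    then show ?thesis
      using less.hyps that trsum_tres by blast
  qed
  have "trsum H (tnm T L H v)" if "trsum L v" "L = K" "subgroup H G" "L \<subseteq> H" for L v H
    using that
  proof (induction arbitrary: H rule: trsum.induct)
    case (trsum_zero L)
    then show ?case using tnm_zero trsum.trsum_zero by metis
  next
    case (trsum_transfer K' L z)
    then show ?case using trsum_tnm_ttr by blast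
  next
    case (trsum_add L a b)
    have "trsum H' (tnm T W H' (tres T W K c))"
      if "c \<in> {a, b}" "subgroup W G" "W \<subseteq> K" "subgroup H' G" "W \<subseteq> H'" for c W H'
    proof (cases "W = K")
      case True
      then show ?thesis
        using trsum_add that tres_id trsum_closed by auto
    next
      case False
      then show ?thesis
        using trsum_add that smaller by blast
    qed
    then show ?case
      using trsum_add trsum_closed trsum_subgroup by (intro trsum_tnm_add) auto
  qed
  then show ?case
    using less.prems by blast
qed

lemma trsum_tideal: "is_tideal G T (\<lambda>L. {v. trsum L v})"
  unfolding is_tideal_def
proof (intro conjI allI impI ballI)
  fix H assume H: "subgroup H G"
  show "ideal {v. trsum H v} (tlev T H)"
    using trsum_closed trsum_zero[OF H] trsum_add trsum_mult
    by (intro cring.ideal_by_closure cring_tlev H) auto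
qed (auto intro: trsum_tres trsum_ttr trsum_tnm trsum_tcj)

lemma trsum_least:
  assumes I: "is_tideal G T I" and ZI: "\<And>L. subgroup L G \<Longrightarrow> Z L \<subseteq> I L"
  shows "trsum L v \<Longrightarrow> v \<in> I L"
proof (induction rule: trsum.induct)
  case (trsum_zero L)
  then show ?case by (rule tideal_zero[OF I])
next
  case (trsum_transfer K L z)
  then have "z \<in> I K"
    using ZI by blast
  with trsum_transfer show ?case
    by (intro tideal_ttr[OF I])
next
  case (trsum_add L a b)
  then show ?case
    by (intro tideal_add[OF I] trsum_subgroup)
qed

theorem tgen_eq_trsum:
  assumes L: "subgroup L G"
  shows "tgen G T Z L = {v. trsum L v}"
proof
  show "tgen G T Z L \<subseteq> {v. trsum L v}"
    using trsum_family by (intro tgen_least[OF trsum_tideal]) auto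
  show "{v. trsum L v} \<subseteq> tgen G T Z L"
    using trsum_least[OF tgen_tideal[OF family_subset] tgen_superset] by auto
qed


lemma family_mult_tgen:
  assumes Z': "norm_stable_family G T Z'" and R: "is_tideal G T R"
    and ZZ': "\<And>L z z'. subgroup L G \<Longrightarrow> z \<in> Z L \<Longrightarrow> z' \<in> Z' L \<Longrightarrow> z \<otimes>\<^bsub>tlev T L\<^esub> z' \<in> R L"
    and L: "subgroup L G" and z: "z \<in> Z L" and q: "q \<in> tgen G T Z' L"
  shows "z \<otimes>\<^bsub>tlev T L\<^esub> q \<in> R L"
proof -
  interpret Z': norm_stable_family G T Z' by (fact Z')
  have "Z'.trsum L q"
    using q Z'.tgen_eq_trsum[OF L] by blast
  then show ?thesis
    using z
  proof (induction arbitrary: z rule: Z'.trsum.induct)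
    case (trsum_zero L)
    interpret L: cring "tlev T L" using cring_tlev trsum_zero(1) .
    have "z \<in> carrier (tlev T L)"
      using family_subset[OF trsum_zero(1)] trsum_zero(2) by blast
    then show ?case
      using tideal_zero[OF R trsum_zero(1)] by simp
  next
    case (trsum_transfer K L z')
    have zc: "z \<in> carrier (tlev T L)" and z'c: "z' \<in> carrier (tlev T K)"
      using trsum_transfer family_subset Z'.family_subset by blast+
    have "z \<otimes>\<^bsub>tlev T L\<^esub> ttr T K L z' = ttr T K L (tres T K L z \<otimes>\<^bsub>tlev T K\<^esub> z')"
      using trsum_transfer(1-3) z'c zc by (rule ttr_frobenius_left)
    moreover have "tres T K L z \<otimes>\<^bsub>tlev T K\<^esub> z' \<in> R K"
      using trsum_transfer by (intro ZZ' family_tres) auto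
    ultimately show ?case
      using trsum_transfer tideal_ttr[OF R] by simp
  next
    case (trsum_add L a b)
    interpret L: cring "tlev T L" using cring_tlev Z'.trsum_subgroup[OF trsum_add(1)] .
    show ?case
      using trsum_add Z'.trsum_closed Z'.trsum_subgroup family_subset tideal_add[OF R]
      by (simp add: L.r_distr subset_iff)
  qed
qed

lemma tgen_mult_tgen:
  assumes Z': "norm_stable_family G T Z'" and R: "is_tideal G T R"
    and ZZ': "\<And>L z z'. subgroup L G \<Longrightarrow> z \<in> Z L \<Longrightarrow> z' \<in> Z' L \<Longrightarrow> z \<otimes>\<^bsub>tlev T L\<^esub> z' \<in> R L"
    and L: "subgroup L G" and p: "p \<in> tgen G T Z L" and q: "q \<in> tgen G T Z' L"
  shows "p \<otimes>\<^bsub>tlev T L\<^esub> q \<in> R L"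
proof -
  interpret Z': norm_stable_family G T Z' by (fact Z')
  have "trsum L p"
    using p tgen_eq_trsum[OF L] by blast
  then show ?thesis
    using q
  proof (induction arbitrary: q rule: trsum.induct)
    case (trsum_zero L)
    interpret L: cring "tlev T L" using cring_tlev trsum_zero(1) .
    have "q \<in> carrier (tlev T L)"
      using tideal_subset[OF tgen_tideal[OF Z'.family_subset] trsum_zero(1)] trsum_zero(2) by blast
    then show ?case
      using tideal_zero[OF R trsum_zero(1)] by simp
  next
    case (trsum_transfer K L z)
    have q: "q \<in> carrier (tlev T L)"
      using trsum_transfer tideal_subset[OF tgen_tideal[OF Z'.family_subset]] by blast
    have "ttr T K L z \<otimes>\<^bsub>tlev T L\<^esub> q = ttr T K L (z \<otimes>\<^bsub>tlev T K\<^esub> tres T K L q)"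
      using trsum_transfer family_subset q by (intro ttr_frobenius) auto
    moreover have "z \<otimes>\<^bsub>tlev T K\<^esub> tres T K L q \<in> R K"
      using trsum_transfer tideal_tres[OF tgen_tideal[OF Z'.family_subset]]
      by (intro family_mult_tgen[OF Z' R ZZ']) auto
    ultimately show ?case
      using trsum_transfer tideal_ttr[OF R] by simp
  next
    case (trsum_add L a b)
    interpret L: cring "tlev T L" using cring_tlev trsum_subgroup[OF trsum_add(1)] .
    show ?case
      using trsum_add trsum_closed trsum_subgroup tideal_add[OF R]
        tideal_subset[OF tgen_tideal[OF Z'.family_subset]]
      by (simp add: L.l_distr subset_iff)
  qed
qed

end

section \<open>Morphisms of Tambara functors\<close>

locale tambara_morphism = T: tambara G T + S: tambara G S
  for G :: "'g monoid" (structure) and T :: "('g,'a) tambara_data" and S :: "('g,'b) tambara_data" +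
  fixes \<phi> :: "'g set \<Rightarrow> 'a \<Rightarrow> 'b"
  assumes is_tmorph: "is_tmorph G T S \<phi>"
begin

lemma ring_hom_phi: "subgroup H G \<Longrightarrow> \<phi> H \<in> ring_hom (tlev T H) (tlev S H)"
  using is_tmorph unfolding is_tmorph_def by (elim conjE) fastforce

lemma phi_tres: "subgroup K G \<Longrightarrow> subgroup H G \<Longrightarrow> K \<subseteq> H \<Longrightarrow> x \<in> carrier (tlev T H) \<Longrightarrow>
    \<phi> K (tres T K H x) = tres S K H (\<phi> H x)"
  using is_tmorph unfolding is_tmorph_def by (elim conjE) fastforce

lemma phi_ttr: "subgroup K G \<Longrightarrow> subgroup H G \<Longrightarrow> K \<subseteq> H \<Longrightarrow> x \<in> carrier (tlev T K) \<Longrightarrow>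
    \<phi> H (ttr T K H x) = ttr S K H (\<phi> K x)"
  using is_tmorph unfolding is_tmorph_def by (elim conjE) fastforce

lemma phi_tnm: "subgroup K G \<Longrightarrow> subgroup H G \<Longrightarrow> K \<subseteq> H \<Longrightarrow> x \<in> carrier (tlev T K) \<Longrightarrow>
    \<phi> H (tnm T K H x) = tnm S K H (\<phi> K x)"
  using is_tmorph unfolding is_tmorph_def by (elim conjE) fastforce

lemma phi_tcj: "subgroup H G \<Longrightarrow> g \<in> carrier G \<Longrightarrow> x \<in> carrier (tlev T H) \<Longrightarrow>
    \<phi> (conjg G g H) (tcj T g H x) = tcj S g H (\<phi> H x)"
  using is_tmorph unfolding is_tmorph_def by (elim conjE) fastforce

lemma phi_closed: "subgroup H G \<Longrightarrow> x \<in> carrier (tlev T H) \<Longrightarrow> \<phi> H x \<in> carrier (tlev S H)"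
  using ring_hom_phi by (rule ring_hom_closed)

lemma phi_mult: "subgroup H G \<Longrightarrow> x \<in> carrier (tlev T H) \<Longrightarrow> y \<in> carrier (tlev T H) \<Longrightarrow>
    \<phi> H (x \<otimes>\<^bsub>tlev T H\<^esub> y) = \<phi> H x \<otimes>\<^bsub>tlev S H\<^esub> \<phi> H y"
  using ring_hom_phi by (rule ring_hom_mult)

lemma tpreim_tideal: "is_tideal G S J \<Longrightarrow> is_tideal G T (tpreim T \<phi> J)"
  unfolding is_tideal_def tpreim_def
proof (intro conjI allI impI ballI; elim conjE)
  fix H assume "\<forall>H. subgroup H G \<longrightarrow> ideal (J H) (tlev S H)" "subgroup H G"
  then show "ideal {x \<in> carrier (tlev T H). \<phi> H x \<in> J H} (tlev T H)"
    using ring_hom_ring.ideal_vimage[OF ring_hom_ringI2[OF _ _ ring_hom_phi]]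
      T.cring_tlev S.cring_tlev cring.axioms(1) by metis
qed (auto simp: T.tres_closed T.ttr_closed T.tnm_closed T.tcj_closed phi_tres phi_ttr phi_tnm phi_tcj)

text \<open>Scaling makes the image of a Tambara ideal norm-stable without changing the Tambara ideal
  it generates.\<close>
definition image_span :: "('g set \<Rightarrow> 'a set) \<Rightarrow> 'g set \<Rightarrow> 'b set" where
  "image_span I L = {s \<otimes>\<^bsub>tlev S L\<^esub> \<phi> L i | s i. s \<in> carrier (tlev S L) \<and> i \<in> I L}"

lemma image_spanI: "s \<in> carrier (tlev S L) \<Longrightarrow> i \<in> I L \<Longrightarrow> s \<otimes>\<^bsub>tlev S L\<^esub> \<phi> L i \<in> image_span I L"
  unfolding image_span_def by blast

lemma image_spanE:
  assumes "z \<in> image_span I L"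
  obtains s i where "z = s \<otimes>\<^bsub>tlev S L\<^esub> \<phi> L i" "s \<in> carrier (tlev S L)" "i \<in> I L"
  using assms unfolding image_span_def by blast

lemma norm_stable_image_span:
  assumes I: "is_tideal G T I"
  shows "norm_stable_family G S (image_span I)"
proof unfold_locales
  fix L assume L: "subgroup L G"
  show "image_span I L \<subseteq> carrier (tlev S L)"
    using L tideal_subset[OF I L] phi_closed S.cring_tlev[OF L]
    by (auto elim!: image_spanE intro: cring.cring_simprules(5))
next
  fix K L z assume K: "subgroup K G" and L: "subgroup L G" and KL: "K \<subseteq> L" and z: "z \<in> image_span I L"
  from z obtain s i where zs: "z = s \<otimes>\<^bsub>tlev S L\<^esub> \<phi> L i" "s \<in> carrier (tlev S L)" "i \<in> I L"
    by (rule image_spanE)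
  then have "tres S K L z = tres S K L s \<otimes>\<^bsub>tlev S K\<^esub> \<phi> K (tres T K L i)"
    using K L KL tideal_subset[OF I L] phi_closed by (auto simp: S.tres_mult phi_tres)
  then show "tres S K L z \<in> image_span I K"
    using image_spanI[where I=I, OF S.tres_closed[OF K L KL zs(2)] tideal_tres[OF I K L KL zs(3)]] by simp
next
  fix L g z assume L: "subgroup L G" and g: "g \<in> carrier G" and z: "z \<in> image_span I L"
  from z obtain s i where zs: "z = s \<otimes>\<^bsub>tlev S L\<^esub> \<phi> L i" "s \<in> carrier (tlev S L)" "i \<in> I L"
    by (rule image_spanE)
  then have "tcj S g L z = tcj S g L s \<otimes>\<^bsub>tlev S (conjg G g L)\<^esub> \<phi> (conjg G g L) (tcj T g L i)"
    using L g tideal_subset[OF I L] phi_closed by (auto simp: S.tcj_mult phi_tcj)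
  then show "tcj S g L z \<in> image_span I (conjg G g L)"
    using image_spanI[where I=I, OF S.tcj_closed[OF L g zs(2)] tideal_tcj[OF I L g zs(3)]] by simp
next
  fix K L z assume K: "subgroup K G" and L: "subgroup L G" and KL: "K \<subseteq> L" and z: "z \<in> image_span I K"
  from z obtain s i where zs: "z = s \<otimes>\<^bsub>tlev S K\<^esub> \<phi> K i" "s \<in> carrier (tlev S K)" "i \<in> I K"
    by (rule image_spanE)
  then have "tnm S K L z = tnm S K L s \<otimes>\<^bsub>tlev S L\<^esub> \<phi> L (tnm T K L i)"
    using K L KL tideal_subset[OF I K] phi_closed by (auto simp: S.tnm_mult phi_tnm)
  then show "tnm S K L z \<in> image_span I L"
    using image_spanI[where I=I, OF S.tnm_closed[OF K L KL zs(2)] tideal_tnm[OF I K L KL zs(3)]] by simp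
next
  fix L z s assume L: "subgroup L G" and z: "z \<in> image_span I L" and s: "s \<in> carrier (tlev S L)"
  from z obtain s' i where zs: "z = s' \<otimes>\<^bsub>tlev S L\<^esub> \<phi> L i" "s' \<in> carrier (tlev S L)" "i \<in> I L"
    by (rule image_spanE)
  interpret L: cring "tlev S L" using S.cring_tlev L .
  have "z \<otimes>\<^bsub>tlev S L\<^esub> s = (s' \<otimes>\<^bsub>tlev S L\<^esub> s) \<otimes>\<^bsub>tlev S L\<^esub> \<phi> L i"
    using zs s L tideal_subset[OF I L] phi_closed by (auto simp: L.m_ac)
  then show "z \<otimes>\<^bsub>tlev S L\<^esub> s \<in> image_span I L"
    using image_spanI[where I=I, OF L.m_closed[OF zs(2) s] zs(3)] by simp
qed

lemma phi_mem_tgen_image_span: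
  assumes I: "is_tideal G T I" and L: "subgroup L G" and i: "i \<in> I L"
  shows "\<phi> L i \<in> tgen G S (image_span I) L"
proof -
  interpret L: cring "tlev S L" using S.cring_tlev L .
  have "i \<in> carrier (tlev T L)"
    using tideal_subset[OF I L] i by (rule subsetD)
  then have "\<phi> L i = \<one>\<^bsub>tlev S L\<^esub> \<otimes>\<^bsub>tlev S L\<^esub> \<phi> L i"
    using phi_closed[OF L] by simp
  then have "\<phi> L i \<in> image_span I L"
    using image_spanI[where I=I, OF L.one_closed i] by simp
  then show ?thesis
    by (rule subsetD[OF tgen_superset[OF L]])
qed

lemma tgen_image_span_subset:
  assumes J: "is_tideal G S J" and image: "\<And>L i. subgroup L G \<Longrightarrow> i \<in> I L \<Longrightarrow> \<phi> L i \<in> J L"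
  shows "tgen G S (image_span I) L \<subseteq> J L"
proof (rule tgen_least[OF J])
  fix M assume M: "subgroup M G"
  show "image_span I M \<subseteq> J M"
  proof
    fix z assume "z \<in> image_span I M"
    then obtain s i where "z = s \<otimes>\<^bsub>tlev S M\<^esub> \<phi> M i" "s \<in> carrier (tlev S M)" "i \<in> I M"
      by (rule image_spanE)
    then show "z \<in> J M"
      using tideal_mult[OF J M] image[OF M] by simp
  qed
qed

lemma tprod_tgen_image_span:
  assumes I: "is_tideal G T I" and I': "is_tideal G T I'"
  shows "tprod G S (tgen G S (image_span I)) (tgen G S (image_span I')) L
           \<subseteq> tgen G S (image_span (tprod G T I I')) L"
proof -
  interpret Z: norm_stable_family G S "image_span I"
    using norm_stable_image_span[OF I] .
  let ?R = "tgen G S (image_span (tprod G T I I'))"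
  have R: "is_tideal G S ?R"
    using norm_stable_family.family_subset[OF norm_stable_image_span[OF T.tprod_tideal[OF I I']]]
    by (rule S.tgen_tideal)
  have "z \<otimes>\<^bsub>tlev S M\<^esub> z' \<in> ?R M"
    if M: "subgroup M G" and "z \<in> image_span I M" "z' \<in> image_span I' M" for M z z'
  proof -
    interpret M: cring "tlev S M" using S.cring_tlev M .
    obtain s i where z: "z = s \<otimes>\<^bsub>tlev S M\<^esub> \<phi> M i" "s \<in> carrier (tlev S M)" "i \<in> I M"
      using \<open>z \<in> image_span I M\<close> by (rule image_spanE)
    obtain s' i' where z': "z' = s' \<otimes>\<^bsub>tlev S M\<^esub> \<phi> M i'" "s' \<in> carrier (tlev S M)" "i' \<in> I' M"
      using \<open>z' \<in> image_span I' M\<close> by (rule image_spanE)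
    have "i \<in> carrier (tlev T M)" "i' \<in> carrier (tlev T M)"
      using z z' tideal_subset[OF I M] tideal_subset[OF I' M] by blast+
    then have "z \<otimes>\<^bsub>tlev S M\<^esub> z' = (s \<otimes>\<^bsub>tlev S M\<^esub> s') \<otimes>\<^bsub>tlev S M\<^esub> \<phi> M (i \<otimes>\<^bsub>tlev T M\<^esub> i')"
      using z z' M phi_closed by (simp add: phi_mult M.m_ac)
    moreover have "(s \<otimes>\<^bsub>tlev S M\<^esub> s') \<otimes>\<^bsub>tlev S M\<^esub> \<phi> M (i \<otimes>\<^bsub>tlev T M\<^esub> i') \<in> image_span (tprod G T I I') M"
      using image_spanI[where I="tprod G T I I'", OF M.m_closed[OF z(2) z'(2)] mult_mem_tprod[where I=I and J=I', OF M z(3) z'(3)]] .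
    ultimately show ?thesis
      using tgen_superset[OF M] by (metis subsetD)
  qed
  then show ?thesis
    using Z.tgen_mult_tgen[OF norm_stable_image_span[OF I'] R] R by (intro tprod_least) auto
qed

lemma tpow_tgen1_subset:
  assumes H: "subgroup H G" and x: "x \<in> carrier (tlev T H)"
  shows "subgroup L G \<Longrightarrow>
    tpow G S (tgen1 G S H (\<phi> H x)) n L \<subseteq> tgen G S (image_span (tpow G T (tgen1 G T H x) n)) L"
proof (induction n arbitrary: L)
  case 0
  interpret SL: cring "tlev S L" using S.cring_tlev 0 .
  interpret TL: cring "tlev T L" using T.cring_tlev 0 .
  have "v \<in> image_span (\<lambda>L. carrier (tlev T L)) L" if v: "v \<in> carrier (tlev S L)" for v
  proof -
    have "v = v \<otimes>\<^bsub>tlev S L\<^esub> \<phi> L \<one>\<^bsub>tlev T L\<^esub>"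
      using v ring_hom_one[OF ring_hom_phi[OF 0]] by simp
    then show ?thesis
      using image_spanI[where I="\<lambda>L. carrier (tlev T L)", OF v TL.one_closed] by simp
  qed
  then show ?case
    using tgen_superset[OF 0] by fastforce
next
  case (Suc n)
  let ?X = "tgen1 G T H x" and ?A = "tpow G T (tgen1 G T H x) n"
  have X: "is_tideal G T ?X" and A: "is_tideal G T ?A"
    using T.tgen1_tideal[OF H x] T.tpow_tideal by blast+
  have "tgen1 G S H (\<phi> H x) M \<subseteq> tgen G S (image_span ?X) M" for M
    using phi_mem_tgen_image_span[OF X H mem_tgen1[OF H]]
      S.tgen_tideal[OF norm_stable_family.family_subset[OF norm_stable_image_span[OF X]]]
    by (intro tgen1_least)
  then have "tpow G S (tgen1 G S H (\<phi> H x)) (Suc n) L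
               \<subseteq> tprod G S (tgen G S (image_span ?A)) (tgen G S (image_span ?X)) L"
    using Suc.IH Suc.prems norm_stable_family.family_subset[OF norm_stable_image_span] A X
    by (simp only: tpow.simps) (intro S.tprod_mono S.tgen_tideal; blast)
  also have "\<dots> \<subseteq> tgen G S (image_span (tpow G T ?X (Suc n))) L"
    using tprod_tgen_image_span[OF A X] by simp
  finally show ?case .
qed

lemma tradical_tpreim_subset:
  assumes J: "is_tideal G S J" and H: "subgroup H G"
  shows "tradical G T (tpreim T \<phi> J) H \<subseteq> tpreim T \<phi> (tradical G S J) H"
proof
  fix x assume "x \<in> tradical G T (tpreim T \<phi> J) H"
  then obtain n where x: "x \<in> carrier (tlev T H)" and n: "n \<ge> 1"
    and pow: "\<And>L. subgroup L G \<Longrightarrow> tpow G T (tgen1 G T H x) n L \<subseteq> tpreim T \<phi> J L"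
    unfolding tradical_def by blast
  have "tgen G S (image_span (tpow G T (tgen1 G T H x) n)) L \<subseteq> J L" for L
    using pow unfolding tpreim_def by (intro tgen_image_span_subset[OF J]) blast
  then have "tpow G S (tgen1 G S H (\<phi> H x)) n L \<subseteq> J L" if "subgroup L G" for L
    using tpow_tgen1_subset[OF H x that] by blast
  then show "x \<in> tpreim T \<phi> (tradical G S J) H"
    unfolding tpreim_def tradical_def using x n phi_closed[OF H x] by auto
qed

end

theorem lemma6p9:
  fixes G :: "'g monoid"
    and T :: "('g,'a) tambara_data" and S :: "('g,'b) tambara_data"
    and \<phi> :: "'g set \<Rightarrow> 'a \<Rightarrow> 'b" and J :: "'g set \<Rightarrow> 'b set"
  assumes "group G" and "finite (carrier G)"
    and "is_tambara G T" and "is_tambara G S"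
    and "is_tmorph G T S \<phi>"
    and "is_tideal G S J" and "is_radical G S J"
  shows "is_tideal G T (tpreim T \<phi> J) \<and> is_radical G T (tpreim T \<phi> J)"
proof -
  interpret tambara_morphism G T S \<phi>
    using assms by (simp add: tambara_morphism_def tambara_morphism_axioms_def tambara_def tambara_axioms_def)
  have preim: "is_tideal G T (tpreim T \<phi> J)"
    using tpreim_tideal assms(6) .
  have "tradical G T (tpreim T \<phi> J) H \<subseteq> tpreim T \<phi> J H" if H: "subgroup H G" for H
  proof -
    have "tradical G S J H = J H"
      using assms(7) H unfolding is_radical_def by simp
    then show ?thesis
      using tradical_tpreim_subset[OF assms(6) H] unfolding tpreim_def by simp
  qed
  then have "is_radical G T (tpreim T \<phi> J)"
    unfolding is_radical_def using T.tideal_subset_tradical[OF preim] by blast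
  with preim show ?thesis ..
qed

end
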